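(* Let $r\ge 0$ and let $k$ be an algebraically closed field of characteristic coprime to $2$ and to $r+1$. Let $A_r=k[[x,y]]/(y^2-x^{r+1})$. Then, up to conjugation by an automorphism of $A_r$, every non-trivial involution $\sigma$ of the $k$-algebra $A_r$ is one of the following: (a) if $r$ is even: $x\mapsto x$, $y\mapsto -y$; (b) if $r$ is odd and $r\ge 3$: one of (b1) $x\mapsto x$, $y\mapsto -y$; (b2) $x\mapsto -x$, $y\mapsto y$; (b3) $x\mapsto -x$, $y\mapsto -y$; (c) if $r=1$: one of (c1) $x\mapsto x$, $y\mapsto -y$; (c2) $x\mapsto -x$, $y\mapsto -y$; (c3) $x\mapsto y$, $y\mapsto x$. *)

theory Defs
  imports "HOL-Algebra.QuotRing" "HOL-Algebra.RingHom"
    "HOL-Computational_Algebra.Formal_Power_Series"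
    "HOL-Computational_Algebra.Polynomial"
begin

definition alg_closed_field :: "'a::field itself \<Rightarrow> bool" where
  "alg_closed_field _ \<longleftrightarrow> (\<forall>p :: 'a poly. degree p \<ge> 1 \<longrightarrow> (\<exists>z. poly p z = 0))"

text \<open>The power series ring k[[x,y]], realised as k[[x]][[y]], as an HOL-Algebra ring.\<close>
definition PS :: "'a::field fps fps ring" where
  "PS = \<lparr>carrier = UNIV, monoid.mult = (\<lambda>a b. a * b), one = 1,
         ring.zero = 0, add = (\<lambda>a b. a + b)\<rparr>"

definition Xv :: "'a::field fps fps" where "Xv = fps_const fps_X"
definition Yv :: "'a::field fps fps" where "Yv = fps_X"

definition Irel :: "nat \<Rightarrow> 'a::field fps fps set" where
  "Irel r = genideal PS {Yv ^ 2 - Xv ^ (r + 1)}"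

definition A_ring :: "nat \<Rightarrow> 'a::field fps fps set ring" where
  "A_ring r = PS Quot (Irel r)"

definition cls :: "nat \<Rightarrow> 'a::field fps fps \<Rightarrow> 'a fps fps set" where
  "cls r f = Irel r +>\<^bsub>PS\<^esub> f"

definition kalg_aut :: "nat \<Rightarrow> ('a::field fps fps set \<Rightarrow> 'a fps fps set) \<Rightarrow> bool" where
  "kalg_aut r s \<longleftrightarrow> s \<in> ring_iso (A_ring r) (A_ring r) \<and>
     (\<forall>c::'a. s (cls r (fps_const (fps_const c))) = cls r (fps_const (fps_const c)))"

definition nontriv_involution :: "nat \<Rightarrow> ('a::field fps fps set \<Rightarrow> 'a fps fps set) \<Rightarrow> bool" where
  "nontriv_involution r s \<longleftrightarrow> kalg_aut r s \<and>
     (\<forall>a \<in> carrier (A_ring r). s (s a) = a) \<and>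
     (\<exists>a \<in> carrier (A_ring r). s a \<noteq> a)"

end

theory Submission
  imports Defs
begin

text \<open>
  For even \<open>r\<close>, \<open>x \<mapsto> t\<^sup>2, y \<mapsto> t^(r+1)\<close> embeds \<open>A_r\<close> into \<open>k[[t]]\<close>; for odd \<open>r = 2m - 1\<close>,
  \<open>x \<mapsto> (t, t), y \<mapsto> (t^m, -t^m)\<close> embeds it into \<open>k[[t]] \<times> k[[t]]\<close>, one factor per branch of
  \<open>y\<^sup>2 = x^(2m)\<close>. Since a homomorphism \<open>k[[x,y]] \<rightarrow> k[[t]]\<close> is determined by the images of \<open>x\<close>
  and \<open>y\<close>, an automorphism of \<open>A_r\<close> acts on the image by substituting power series
  \<open>\<phi>(t) = c t + \<dots>\<close> into \<open>t\<close> (on each branch, possibly swapping the branches). For an involution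
  these substitutions compose to the identity, and as \<open>2\<close> is invertible, a change of variable
  such as \<open>u = (t + c \<phi>) / 2\<close> linearizes them to \<open>t \<mapsto> \<plusminus>t\<close>. This change of variable
  preserves the image of \<open>A_r\<close> (for even \<open>r\<close> because \<open>u\<close> is odd up to order \<open>r\<close>), hence comes
  from an automorphism of \<open>A_r\<close>. The resulting linear involutions are read off on \<open>x\<close> and \<open>y\<close>.
\<close>

unbundle fps_syntax

section \<open>The ring \<open>A_r\<close>\<close>

lemma PS_simps [simp]:
  "carrier PS = UNIV" "monoid.mult PS a b = a * b" "monoid.one PS = 1"
  "ring.zero PS = 0" "ring.add PS a b = a + b"
  by (simp_all add: PS_def)

lemma cring_PS: "cring (PS :: 'a::field fps fps ring)"
proof (rule cringI)
  show "abelian_group (PS :: 'a fps fps ring)"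
    by (rule abelian_groupI) (auto simp: PS_def intro: left_minus)
  show "Group.comm_monoid (PS :: 'a fps fps ring)"
    by (simp add: PS_def Group.monoid.intro monoid.monoid_comm_monoidI mult.assoc mult.commute)
qed (auto simp: PS_def distrib_right)

definition A_rel :: "nat \<Rightarrow> 'a::field fps fps" where
  "A_rel r = Yv ^ 2 - Xv ^ (r + 1)"

lemma Irel_eq_multiples: "Irel r = {H :: 'a::field fps fps. A_rel r dvd H}"
proof -
  have "Irel r = cgenideal PS (A_rel r :: 'a fps fps)"
    unfolding Irel_def A_rel_def
    by (rule cring.cgenideal_eq_genideal[OF cring_PS, symmetric]) simp
  then show ?thesis
    by (auto simp: cgenideal_def dvd_def mult.commute)
qed

lemma ideal_Irel: "ideal (Irel r) (PS :: 'a::field fps fps ring)"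
  unfolding Irel_def by (rule ring.genideal_ideal) (auto intro: cring.axioms(1)[OF cring_PS])

lemma cls_eq_coset: "cls r F = {H + F | H. A_rel r dvd H}"
  by (auto simp: cls_def a_r_coset_def r_coset_def Irel_eq_multiples)

lemma cls_eq_cls_iff:
  fixes F G :: "'a::field fps fps"
  shows "cls r F = cls r G \<longleftrightarrow> A_rel r dvd (F - G)"
proof
  assume "cls r F = cls r G"
  moreover have "F \<in> cls r F"
    unfolding cls_eq_coset by (auto intro: exI[of _ 0])
  ultimately show "A_rel r dvd (F - G)"
    unfolding cls_eq_coset by auto
next
  assume d: "A_rel r dvd (F - G)"
  have "H + F \<in> cls r G" if "A_rel r dvd H" for H
    using that d unfolding cls_eq_coset by (auto intro!: exI[of _ "H + (F - G)"])
  moreover have "H + G \<in> cls r F" if "A_rel r dvd H" for H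
    using that d unfolding cls_eq_coset by (auto intro!: exI[of _ "H - (F - G)"])
  ultimately show "cls r F = cls r G"
    unfolding cls_eq_coset by blast
qed

lemma carrier_A_ring: "carrier (A_ring r) = range (cls r :: 'a::field fps fps \<Rightarrow> _)"
  by (auto simp: A_ring_def FactRing_def A_RCOSETS_defs cls_def a_r_coset_def)

lemma A_ring_mult_cls: "monoid.mult (A_ring r) (cls r F) (cls r G) = cls r (F * G)"
  using ideal.rcoset_mult_add[OF ideal_Irel, of F G]
  by (simp add: A_ring_def FactRing_def cls_def)

lemma A_ring_add_cls:
  fixes F G :: "'a::field fps fps"
  shows "ring.add (A_ring r) (cls r F) (cls r G) = cls r (F + G)"
proof -
  have "ring.add (A_ring r) (cls r F) (cls r G) = (\<Union>a\<in>cls r F. \<Union>b\<in>cls r G. {a + b})"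
    by (simp add: A_ring_def FactRing_def set_add_def set_mult_def)
  also have "\<dots> = cls r (F + G)"
  proof (unfold cls_eq_coset, safe)
    fix H1 H2 :: "'a fps fps"
    assume "A_rel r dvd H1" "A_rel r dvd H2"
    then show "\<exists>H. H1 + F + (H2 + G) = H + (F + G) \<and> A_rel r dvd H"
      by (intro exI[of _ "H1 + H2"]) (auto simp: algebra_simps)
  next
    fix H :: "'a fps fps"
    assume "A_rel r dvd H"
    then show "H + (F + G) \<in> (\<Union>a\<in>{H + F |H. A_rel r dvd H}. \<Union>b\<in>{H + G |H. A_rel r dvd H}. {a + b})"
      by (auto intro!: bexI[of _ "H + F"] bexI[of _ "0 + G"] simp: algebra_simps)
  qed
  finally show ?thesis .
qed

lemma A_ring_one: "monoid.one (A_ring r) = cls r 1"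
  by (simp add: A_ring_def FactRing_def cls_def)

definition conjugate_to ::
    "nat \<Rightarrow> ('a::field fps fps set \<Rightarrow> 'a fps fps set) \<Rightarrow> 'a fps fps \<Rightarrow> 'a fps fps \<Rightarrow> bool" where
  "conjugate_to r \<sigma> Gx Gy \<longleftrightarrow> (\<exists>\<tau>. kalg_aut r \<tau> \<and>
     (let \<rho> = (\<lambda>a. \<tau> (\<sigma> (inv_into (carrier (A_ring r)) \<tau> a))) in
        \<rho> (cls r Xv) = cls r Gx \<and> \<rho> (cls r Yv) = cls r Gy))"

section \<open>Agreement of power series up to a given order\<close>

definition fps_agree :: "nat \<Rightarrow> 'a::comm_ring_1 fps \<Rightarrow> 'a fps \<Rightarrow> bool" where
  "fps_agree N f g \<longleftrightarrow> (\<forall>n<N. f $ n = g $ n)"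

lemma fps_agree_refl [simp]: "fps_agree N f f"
  by (simp add: fps_agree_def)

lemma fps_agree_sym: "fps_agree N f g \<Longrightarrow> fps_agree N g f"
  by (simp add: fps_agree_def)

lemma fps_agree_trans: "fps_agree N f g \<Longrightarrow> fps_agree N g h \<Longrightarrow> fps_agree N f h"
  by (simp add: fps_agree_def)

lemma fps_agree_mono: "fps_agree N f g \<Longrightarrow> M \<le> N \<Longrightarrow> fps_agree M f g"
  by (simp add: fps_agree_def)

lemma fps_agree_0 [simp]: "fps_agree 0 f g"
  by (simp add: fps_agree_def)

lemma fps_agree_1_zero_iff [simp]:
  "fps_agree 1 f 0 \<longleftrightarrow> f $ 0 = 0" "fps_agree (Suc 0) f 0 \<longleftrightarrow> f $ 0 = 0"
  by (simp_all add: fps_agree_def)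

lemma fps_agree_iff_diff: "fps_agree N f g \<longleftrightarrow> fps_agree N (f - g) 0"
  by (simp add: fps_agree_def)

lemma fps_eq_if_agree: "(\<And>N. fps_agree N f g) \<Longrightarrow> f = g"
  by (auto simp: fps_agree_def fps_eq_iff)

lemma fps_agree_add: "fps_agree N a b \<Longrightarrow> fps_agree N c d \<Longrightarrow> fps_agree N (a + c) (b + d)"
  by (simp add: fps_agree_def)

lemma fps_agree_diff: "fps_agree N a b \<Longrightarrow> fps_agree N c d \<Longrightarrow> fps_agree N (a - c) (b - d)"
  by (simp add: fps_agree_def)

lemma fps_agree_mult: "fps_agree N a b \<Longrightarrow> fps_agree N c d \<Longrightarrow> fps_agree N (a * c) (b * d)"
  unfolding fps_agree_def fps_mult_nth by (auto intro!: sum.cong)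

lemma fps_agree_power: "fps_agree N a b \<Longrightarrow> fps_agree N (a ^ k) (b ^ k)"
  by (induction k) (auto intro: fps_agree_mult)

lemma fps_agree_sum:
  "(\<And>i. i \<in> I \<Longrightarrow> fps_agree N (f i) (g i)) \<Longrightarrow> fps_agree N (sum f I) (sum g I)"
  by (induction I rule: infinite_finite_induct) (auto intro: fps_agree_add)

lemma fps_agree_mult_zero:
  assumes x: "fps_agree a x 0" and y: "fps_agree b y 0"
  shows "fps_agree (a + b) (x * y) 0"
  unfolding fps_agree_def fps_mult_nth
proof (intro allI impI)
  fix n assume n: "n < a + b"
  have "x $ i * y $ (n - i) = 0" if "i \<le> n" for i
    using x y n that by (cases "i < a") (auto simp: fps_agree_def)
  then show "(\<Sum>i = 0..n. x $ i * y $ (n - i)) = 0 $ n"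
    by simp
qed

lemma fps_agree_mult_zero_right: "fps_agree a x 0 \<Longrightarrow> fps_agree a (y * x) 0"
  using fps_agree_mult_zero[of 0 y a x] by simp

lemma fps_agree_power_zero: "x $ 0 = 0 \<Longrightarrow> k \<le> j \<Longrightarrow> fps_agree k (x ^ j) 0"
proof (induction j arbitrary: k)
  case (Suc j)
  then have "fps_agree (1 + (k - 1)) (x * x ^ j) 0"
    by (intro fps_agree_mult_zero) auto
  then show ?case
    by (auto intro: fps_agree_mono)
qed simp

lemma fps_agree_compose_left: "fps_agree N a b \<Longrightarrow> fps_agree N (a oo c) (b oo c)"
  unfolding fps_agree_def fps_compose_nth by auto

lemma fps_agree_compose_right: "fps_agree N c d \<Longrightarrow> fps_agree N (a oo c) (a oo d)"
  using fps_agree_power[of N c d]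
  unfolding fps_agree_def fps_compose_nth by (auto intro!: sum.cong)

section \<open>Substitution into bivariate power series\<close>

definition eval_y :: "'a::field fps fps \<Rightarrow> 'a fps \<Rightarrow> 'a fps" where
  "eval_y H q = Abs_fps (\<lambda>n. (\<Sum>j\<le>n. H $ j * q ^ j) $ n)"

lemma eval_y_agree_partial_sum:
  assumes q0: "q $ 0 = 0" and "N \<le> Suc n"
  shows "fps_agree N (eval_y H q) (\<Sum>j\<le>n. H $ j * q ^ j)"
  unfolding fps_agree_def
proof (intro allI impI)
  fix m assume "m < N"
  then have mn: "m \<le> n" using assms by simp
  have "{..n} = {..m} \<union> {m<..n}" using mn by auto
  moreover have "(\<Sum>j\<in>{..m} \<union> {m<..n}. H $ j * q ^ j) =
      (\<Sum>j\<le>m. H $ j * q ^ j) + (\<Sum>j\<in>{m<..n}. H $ j * q ^ j)"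
    by (rule sum.union_disjoint) auto
  ultimately have "(\<Sum>j\<le>n. H $ j * q ^ j) = (\<Sum>j\<le>m. H $ j * q ^ j) + (\<Sum>j\<in>{m<..n}. H $ j * q ^ j)"
    by simp
  moreover have "fps_agree (Suc m) (\<Sum>j\<in>{m<..n}. H $ j * q ^ j) (\<Sum>j\<in>{m<..n}. 0)"
    by (intro fps_agree_sum fps_agree_mult_zero_right fps_agree_power_zero q0) auto
  ultimately show "eval_y H q $ m = (\<Sum>j\<le>n. H $ j * q ^ j) $ m"
    by (simp add: eval_y_def fps_agree_def)
qed

lemma eval_y_eqI:
  assumes q0: "q $ 0 = 0" and "\<And>n. fps_agree (Suc n) G (\<Sum>j\<le>n. H $ j * q ^ j)"
  shows "eval_y H q = G"
proof (rule fps_eq_if_agree)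
  fix N
  show "fps_agree N (eval_y H q) G"
    using eval_y_agree_partial_sum[OF q0, of "Suc N" N H] assms(2)[of N]
    by (meson fps_agree_mono fps_agree_sym fps_agree_trans le_SucI order_refl)
qed

lemma eval_y_add: "eval_y (H + K) q = eval_y H q + eval_y K q"
  by (simp add: eval_y_def fps_eq_iff distrib_right sum.distrib)

lemma eval_y_mult:
  assumes q0: "q $ 0 = 0"
  shows "eval_y (H * K) q = eval_y H q * eval_y K q"
proof (rule eval_y_eqI[OF q0])
  fix n :: nat
  let ?f = "\<lambda>i k. H $ i * K $ k * q ^ (i + k)"
  let ?low = "{(i, k). i + k \<le> n}" and ?high = "{..n} \<times> {..n} - {(i, k). i + k \<le> n}"
  have "fps_agree (Suc n) (eval_y H q * eval_y K q) ((\<Sum>i\<le>n. H $ i * q ^ i) * (\<Sum>k\<le>n. K $ k * q ^ k))"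
    by (intro fps_agree_mult eval_y_agree_partial_sum q0) auto
  also have "(\<Sum>i\<le>n. H $ i * q ^ i) * (\<Sum>k\<le>n. K $ k * q ^ k) = (\<Sum>(i, k)\<in>{..n} \<times> {..n}. ?f i k)"
    by (simp add: sum_product sum.cartesian_product power_add algebra_simps)
  also have "\<dots> = (\<Sum>(i, k)\<in>?low. ?f i k) + (\<Sum>(i, k)\<in>?high. ?f i k)"
  proof -
    have "?low \<subseteq> {..n} \<times> {..n}" by auto
    from sum.subset_diff[OF this] show ?thesis by (simp add: add.commute)
  qed
  finally have "fps_agree (Suc n) (eval_y H q * eval_y K q)
      ((\<Sum>(i, k)\<in>?low. ?f i k) + (\<Sum>(i, k)\<in>?high. ?f i k))" .
  moreover have "fps_agree (Suc n) (\<Sum>(i, k)\<in>?high. ?f i k) (\<Sum>(i, k)\<in>?high. 0)"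
    by (rule fps_agree_sum) (auto intro!: fps_agree_mult_zero_right fps_agree_power_zero simp: q0)
  ultimately have "fps_agree (Suc n) (eval_y H q * eval_y K q) ((\<Sum>(i, k)\<in>?low. ?f i k) + 0)"
    by (simp add: fps_agree_def)
  moreover have "(\<Sum>(i, k)\<in>?low. ?f i k) = (\<Sum>j\<le>n. (H * K) $ j * q ^ j)"
    by (simp add: sum.triangle_reindex_eq fps_mult_nth sum_distrib_right atLeast0AtMost)
  ultimately show "fps_agree (Suc n) (eval_y H q * eval_y K q) (\<Sum>j\<le>n. (H * K) $ j * q ^ j)"
    by simp
qed

lemma eval_y_const: "q $ 0 = 0 \<Longrightarrow> eval_y (fps_const c) q = c"
  by (rule eval_y_eqI) (auto simp: atMost_atLeast0 sum.atLeast_Suc_atMost fps_nth_fps_const)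

lemma eval_y_X:
  assumes "q $ 0 = 0"
  shows "eval_y fps_X q = q"
proof (rule eval_y_eqI[OF assms])
  fix n
  have "(\<Sum>j\<le>n. (fps_X :: 'a fps fps) $ j * q ^ j) = (\<Sum>j\<in>{1} \<inter> {..n}. q)"
    by (rule sum.mono_neutral_cong_right) auto
  then show "fps_agree (Suc n) q (\<Sum>j\<le>n. (fps_X :: 'a fps fps) $ j * q ^ j)"
    by (cases n) (auto simp: fps_agree_def assms)
qed

lemma eval_y_compose:
  assumes q0: "q $ 0 = 0" and f0: "f $ 0 = 0"
  shows "eval_y H q oo f = eval_y (Abs_fps (\<lambda>j. H $ j oo f)) (q oo f)"
proof (rule sym, rule eval_y_eqI)
  show "(q oo f) $ 0 = 0" using q0 by simp
  fix n
  have "fps_agree (Suc n) (eval_y H q oo f) ((\<Sum>j\<le>n. H $ j * q ^ j) oo f)"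
    by (intro fps_agree_compose_left eval_y_agree_partial_sum q0) auto
  also have "(\<Sum>j\<le>n. H $ j * q ^ j) oo f = (\<Sum>j\<le>n. (H $ j oo f) * (q oo f) ^ j)"
    by (simp add: fps_compose_sum_distrib fps_compose_mult_distrib[OF f0] fps_compose_power[OF f0])
  finally show "fps_agree (Suc n) (eval_y H q oo f) (\<Sum>j\<le>n. Abs_fps (\<lambda>j. H $ j oo f) $ j * (q oo f) ^ j)"
    by simp
qed

lemma eval_y_unfold: "q $ 0 = 0 \<Longrightarrow> eval_y H q = H $ 0 + q * eval_y (fps_shift 1 H) q"
proof -
  assume q0: "q $ 0 = 0"
  have "H = fps_const (H $ 0) + fps_X * fps_shift 1 H"
    by (simp add: fps_eq_iff)
  then have "eval_y H q = eval_y (fps_const (H $ 0) + fps_X * fps_shift 1 H) q"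
    by simp
  then show ?thesis
    by (simp add: eval_y_add eval_y_mult[OF q0] eval_y_const[OF q0] eval_y_X[OF q0])
qed

text \<open>\<open>subst2 F p q\<close> is the substitution \<open>F(p, q)\<close> of \<open>x := p\<close>, \<open>y := q\<close>; as
  \<open>F\<close> is stored as a series in \<open>y\<close> over \<open>k[[x]]\<close>, it substitutes into the coefficients first.\<close>

definition compose_coeffs :: "'a::field fps fps \<Rightarrow> 'a fps \<Rightarrow> 'a fps fps" where
  "compose_coeffs F p = Abs_fps (\<lambda>j. F $ j oo p)"

definition subst2 :: "'a::field fps fps \<Rightarrow> 'a fps \<Rightarrow> 'a fps \<Rightarrow> 'a fps" where
  "subst2 F p q = eval_y (compose_coeffs F p) q"

lemma compose_coeffs_add: "compose_coeffs (F + G) p = compose_coeffs F p + compose_coeffs G p"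
  by (simp add: compose_coeffs_def fps_eq_iff fps_compose_add_distrib)

lemma compose_coeffs_mult:
  "p $ 0 = 0 \<Longrightarrow> compose_coeffs (F * G) p = compose_coeffs F p * compose_coeffs G p"
  by (simp add: compose_coeffs_def fps_eq_iff fps_mult_nth fps_compose_sum_distrib
      fps_compose_mult_distrib)

lemma subst2_add: "subst2 (F + G) p q = subst2 F p q + subst2 G p q"
  by (simp add: subst2_def compose_coeffs_add eval_y_add)

lemma subst2_mult: "p $ 0 = 0 \<Longrightarrow> q $ 0 = 0 \<Longrightarrow> subst2 (F * G) p q = subst2 F p q * subst2 G p q"
  by (simp add: subst2_def compose_coeffs_mult eval_y_mult)

lemma compose_coeffs_const: "compose_coeffs (fps_const a) p = fps_const (a oo p)"
  by (simp add: compose_coeffs_def fps_eq_iff)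

lemma subst2_const: "q $ 0 = 0 \<Longrightarrow> subst2 (fps_const a) p q = a oo p"
  by (simp add: subst2_def compose_coeffs_const eval_y_const)

lemma subst2_scalar: "q $ 0 = 0 \<Longrightarrow> subst2 (fps_const (fps_const c)) p q = fps_const c"
  by (simp add: subst2_const)

lemma subst2_one: "q $ 0 = 0 \<Longrightarrow> subst2 1 p q = 1"
  using subst2_scalar[of q 1 p] by simp

lemma subst2_Xv: "p $ 0 = 0 \<Longrightarrow> q $ 0 = 0 \<Longrightarrow> subst2 Xv p q = p"
  by (simp add: Xv_def subst2_const)

lemma compose_coeffs_Yv: "compose_coeffs Yv p = fps_X"
  by (simp add: compose_coeffs_def fps_eq_iff Yv_def fps_X_def)

lemma subst2_Yv: "q $ 0 = 0 \<Longrightarrow> subst2 Yv p q = q"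
  by (simp add: subst2_def compose_coeffs_Yv eval_y_X)

lemma subst2_compose:
  assumes p0: "p $ 0 = 0" and q0: "q $ 0 = 0" and f0: "f $ 0 = 0"
  shows "subst2 F p q oo f = subst2 F (p oo f) (q oo f)"
proof -
  have "Abs_fps (\<lambda>j. compose_coeffs F p $ j oo f) = compose_coeffs F (p oo f)"
    by (simp add: compose_coeffs_def fps_eq_iff fps_compose_assoc[OF f0 p0])
  then show ?thesis
    by (simp add: subst2_def eval_y_compose[OF q0 f0])
qed

lemma subst2_agree:
  assumes "q $ 0 = 0" "q' $ 0 = 0" "fps_agree N p p'" "fps_agree N q q'"
  shows "fps_agree N (subst2 F p q) (subst2 F p' q')"
proof -
  have partial_sum: "fps_agree N (subst2 F p q) (\<Sum>j\<le>N. (F $ j oo p) * q ^ j)"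
    if "q $ 0 = 0" for p q
    using eval_y_agree_partial_sum[OF that, of N N "compose_coeffs F p"]
    by (simp add: subst2_def compose_coeffs_def)
  have "fps_agree N (\<Sum>j\<le>N. (F $ j oo p) * q ^ j) (\<Sum>j\<le>N. (F $ j oo p') * q' ^ j)"
    by (intro fps_agree_sum fps_agree_mult fps_agree_compose_right fps_agree_power assms)
  then show ?thesis
    using partial_sum[OF assms(1)] partial_sum[OF assms(2)] by (meson fps_agree_sym fps_agree_trans)
qed

section \<open>Homomorphisms \<open>k[[x,y]] \<rightarrow> k[[t]]\<close>\<close>

definition kalg_hom :: "('a::field fps fps \<Rightarrow> 'a fps) \<Rightarrow> bool" where
  "kalg_hom b \<longleftrightarrow> (\<forall>F G. b (F + G) = b F + b G) \<and> (\<forall>F G. b (F * G) = b F * b G) \<and>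
     (\<forall>c. b (fps_const (fps_const c)) = fps_const c)"

lemma kalg_hom_subst2: "p $ 0 = 0 \<Longrightarrow> q $ 0 = 0 \<Longrightarrow> kalg_hom (\<lambda>F. subst2 F p q)"
  by (simp add: kalg_hom_def subst2_add subst2_mult subst2_scalar)

context
  fixes b :: "'a::field fps fps \<Rightarrow> 'a fps"
  assumes b: "kalg_hom b"
begin

lemma kalg_hom_add: "b (F + G) = b F + b G"
  and kalg_hom_mult: "b (F * G) = b F * b G"
  and kalg_hom_scalar: "b (fps_const (fps_const c)) = fps_const c"
  using b by (simp_all add: kalg_hom_def)

lemma kalg_hom_one: "b 1 = 1"
  using kalg_hom_scalar[of 1] by simp

lemma kalg_hom_zero: "b 0 = 0"
  using kalg_hom_scalar[of 0] by simp

lemma kalg_hom_diff: "b (F - G) = b F - b G"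
  using kalg_hom_add[of "F - G" G] by (simp add: algebra_simps)

lemma kalg_hom_power: "b (F ^ n) = b F ^ n"
  by (induction n) (simp_all add: kalg_hom_one kalg_hom_mult)

lemma kalg_hom_sum: "b (sum f I) = (\<Sum>i\<in>I. b (f i))"
  by (induction I rule: infinite_finite_induct) (simp_all add: kalg_hom_zero kalg_hom_add)

text \<open>Homomorphisms are local: if \<open>b x\<close> or \<open>b y\<close> had a constant term \<open>c \<noteq> 0\<close>, the unit
  \<open>x - c\<close> resp. \<open>y - c\<close> would be mapped to a non-unit.\<close>

lemma kalg_hom_unit_nth_0:
  assumes "U * V = 1"
  shows "b U $ 0 \<noteq> 0"
proof -
  have "b U * b V = 1"
    using assms by (metis kalg_hom_mult kalg_hom_one)
  then have "(b U * b V) $ 0 = 1"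
    by simp
  then show ?thesis
    by auto
qed

lemma kalg_hom_Xv_nth_0: "b Xv $ 0 = 0"
proof (rule ccontr)
  define c where "c = b Xv $ 0"
  assume "b Xv $ 0 \<noteq> 0"
  then have "(fps_X - fps_const c) * inverse (fps_X - fps_const c) = 1"
    by (intro inverse_mult_eq_1') (simp add: c_def)
  then have "(Xv - fps_const (fps_const c)) * fps_const (inverse (fps_X - fps_const c)) = 1"
    by (simp add: Xv_def)
  from kalg_hom_unit_nth_0[OF this] show False
    by (simp add: kalg_hom_diff kalg_hom_scalar c_def)
qed

lemma kalg_hom_Yv_nth_0: "b Yv $ 0 = 0"
proof (rule ccontr)
  define c where "c = b Yv $ 0"
  assume "b Yv $ 0 \<noteq> 0"
  then have c: "c \<noteq> 0" by (simp add: c_def)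
  define V :: "'a fps fps" where "V = Abs_fps (\<lambda>n. - fps_const (inverse c ^ Suc n))"
  have "(Yv - fps_const (fps_const c)) * V = 1"
  proof (rule fps_ext)
    fix n
    show "((Yv - fps_const (fps_const c)) * V) $ n = 1 $ n"
      using c by (cases n) (simp_all add: Yv_def V_def algebra_simps)
  qed
  from kalg_hom_unit_nth_0[OF this] show False
    by (simp add: kalg_hom_diff kalg_hom_scalar c_def)
qed

end

lemma fps2_decompose:
  fixes F :: "'a::field fps fps"
  shows "\<exists>H1 H2. F = (\<Sum>j<N. \<Sum>i<N. fps_const (fps_const (F $ j $ i)) * Xv ^ i * Yv ^ j)
                    + Yv ^ N * H1 + Xv ^ N * H2"
proof -
  define P where "P = (\<Sum>j<N. \<Sum>i<N. fps_const (fps_const (F $ j $ i)) * Xv ^ i * Yv ^ j)"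
  define G where "G = F - P"
  have monomial: "(fps_const (fps_const c) * Xv ^ i * Yv ^ k) $ j =
      (if k = j then fps_const c * fps_X ^ i else 0)" for c :: 'a and i j k
    by (simp add: Xv_def Yv_def fps_X_power_mult_right_nth)
  have "P $ j = (\<Sum>k<N. if k = j then (\<Sum>i<N. fps_const (F $ k $ i) * fps_X ^ i) else 0)" for j
    unfolding P_def fps_sum_nth monomial by (rule sum.cong) auto
  then have "P $ j = (if j < N then (\<Sum>i<N. fps_const (F $ j $ i) * fps_X ^ i) else 0)" for j
    by simp
  then have G0: "G $ j $ i = 0" if "i < N" "j < N" for i j
    using that by (simp add: G_def fps_sum_nth fps_X_power_nth mult_delta_right)
  define H1 where "H1 = fps_shift N G"
  define H2 where "H2 = Abs_fps (\<lambda>j. if j < N then fps_shift N (G $ j) else 0)"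
  have "G = Yv ^ N * H1 + Xv ^ N * H2"
  proof (subst fps_eq_iff, intro allI)
    fix j
    show "G $ j = (Yv ^ N * H1 + Xv ^ N * H2) $ j"
    proof (cases "j < N")
      case True
      have "G $ j = fps_X ^ N * fps_shift N (G $ j)"
        using G0[OF _ True] by (simp add: fps_eq_iff fps_X_power_mult_nth)
      then show ?thesis using True
        by (simp add: Yv_def Xv_def H1_def H2_def fps_X_power_mult_nth)
    next
      case False
      then show ?thesis
        by (simp add: Yv_def Xv_def H1_def H2_def fps_X_power_mult_nth)
    qed
  qed
  then show ?thesis
    by (auto simp: G_def P_def algebra_simps)
qed

text \<open>As \<open>b x\<close> and \<open>b y\<close> have no constant term, modulo \<open>t^N\<close> a homomorphism \<open>b\<close> only sees
  the polynomial part of \<open>fps2_decompose\<close>.\<close>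

lemma kalg_hom_eqI:
  assumes b1: "kalg_hom b1" and b2: "kalg_hom b2"
    and X: "b1 Xv = b2 Xv" and Y: "b1 Yv = b2 Yv"
  shows "b1 F = b2 F"
proof (rule fps_eq_if_agree)
  fix N
  obtain H1 H2 where F: "F = (\<Sum>j<N. \<Sum>i<N. fps_const (fps_const (F $ j $ i)) * Xv ^ i * Yv ^ j)
                    + Yv ^ N * H1 + Xv ^ N * H2"
    using fps2_decompose by blast
  have image: "b F = (\<Sum>j<N. \<Sum>i<N. fps_const (F $ j $ i) * b Xv ^ i * b Yv ^ j)
                     + b Yv ^ N * b H1 + b Xv ^ N * b H2" if "kalg_hom b" for b
    by (subst F) (simp add: that kalg_hom_add kalg_hom_mult kalg_hom_sum kalg_hom_power
        kalg_hom_scalar)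
  have tail: "fps_agree N (b Yv ^ N * b H1 + b Xv ^ N * b H2) 0"
    if "kalg_hom b" for b
    using fps_agree_add[OF fps_agree_mult_zero[of N _ 0] fps_agree_mult_zero[of N _ 0]]
      fps_agree_power_zero[OF kalg_hom_Yv_nth_0[OF that], of N N]
      fps_agree_power_zero[OF kalg_hom_Xv_nth_0[OF that], of N N]
    by simp
  show "fps_agree N (b1 F) (b2 F)"
    using tail[OF b1] tail[OF b2] unfolding image[OF b1] image[OF b2] X Y
    by (simp add: fps_agree_def)
qed

section \<open>Models of \<open>A_r\<close>\<close>

text \<open>A model of \<open>A_r\<close> is a ring homomorphism out of \<open>k[[x,y]]\<close> with kernel
  \<open>(y^2 - x^(r+1))\<close>; its image is a concrete copy of \<open>A_r\<close>, onto which automorphisms of \<open>A_r\<close>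
  are transported.\<close>

locale A_model =
  fixes r :: nat and Phi :: "'a::field fps fps \<Rightarrow> 'b::comm_ring_1"
  assumes Phi_add: "Phi (F + G) = Phi F + Phi G"
    and Phi_mult: "Phi (F * G) = Phi F * Phi G"
    and Phi_one: "Phi 1 = 1"
    and Phi_eq_0_iff: "Phi F = 0 \<longleftrightarrow> A_rel r dvd F"
begin

lemma Phi_zero: "Phi 0 = 0"
  using Phi_add[of 0 0] by simp

lemma Phi_diff: "Phi (F - G) = Phi F - Phi G"
  using Phi_add[of "F - G" G] by (simp add: algebra_simps)

lemma Phi_uminus: "Phi (- F) = - Phi F"
  using Phi_diff[of 0 F] by (simp add: Phi_zero)

lemma Phi_power: "Phi (F ^ n) = Phi F ^ n"
  by (induction n) (simp_all add: Phi_one Phi_mult)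

lemma Phi_A_rel: "Phi (Yv ^ 2) = Phi (Xv ^ (r + 1))"
  using Phi_eq_0_iff[of "A_rel r"] by (simp add: A_rel_def Phi_diff)

lemma cls_eq_cls_iff_Phi: "cls r F = cls r G \<longleftrightarrow> Phi F = Phi G"
  using cls_eq_cls_iff[of r F G] Phi_eq_0_iff[of "F - G"] by (simp add: Phi_diff)

definition embed :: "'a fps fps set \<Rightarrow> 'b" where
  "embed C = Phi (SOME F. C = cls r F)"

lemma embed_cls [simp]: "embed (cls r F) = Phi F"
proof -
  have "cls r F = cls r (SOME G. cls r F = cls r G)"
    by (rule someI) simp
  then show ?thesis
    unfolding embed_def cls_eq_cls_iff_Phi by simp
qed

definition lift :: "'b \<Rightarrow> 'a fps fps" where
  "lift f = (SOME F. Phi F = f)"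

lemma Phi_lift [simp]: "f \<in> range Phi \<Longrightarrow> Phi (lift f) = f"
  unfolding lift_def by (rule someI_ex) auto

definition transport :: "('a fps fps set \<Rightarrow> 'a fps fps set) \<Rightarrow> 'b \<Rightarrow> 'b" where
  "transport \<sigma> f = embed (\<sigma> (cls r (lift f)))"

lemma cls_lift_Phi [simp]: "cls r (lift (Phi F)) = cls r F"
  by (simp add: cls_eq_cls_iff_Phi)

lemma transport_Phi: "transport \<sigma> (Phi F) = embed (\<sigma> (cls r F))"
  by (simp add: transport_def)

context
  fixes \<sigma> :: "'a fps fps set \<Rightarrow> 'a fps fps set"
  assumes \<sigma>: "kalg_aut r \<sigma>"
begin

lemma kalg_aut_cls: obtains G where "\<sigma> (cls r F) = cls r G"
proof -
  have "cls r F \<in> carrier (A_ring r)"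
    by (simp add: carrier_A_ring)
  then have "\<sigma> (cls r F) \<in> carrier (A_ring r)"
    using \<sigma> unfolding kalg_aut_def by (auto dest: ring_iso_memE(1))
  then show ?thesis
    using that by (auto simp: carrier_A_ring)
qed

lemma transport_in_range: "transport \<sigma> (Phi F) \<in> range Phi"
  by (metis kalg_aut_cls embed_cls rangeI transport_Phi)

lemma transport_add: "transport \<sigma> (Phi F + Phi G) = transport \<sigma> (Phi F) + transport \<sigma> (Phi G)"
proof -
  obtain F' G' where F': "\<sigma> (cls r F) = cls r F'" and G': "\<sigma> (cls r G) = cls r G'"
    using kalg_aut_cls by metis
  have "\<sigma> (cls r (F + G)) = \<sigma> (ring.add (A_ring r) (cls r F) (cls r G))"
    by (simp add: A_ring_add_cls)
  also have "\<dots> = ring.add (A_ring r) (\<sigma> (cls r F)) (\<sigma> (cls r G))"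
    using \<sigma> unfolding kalg_aut_def by (intro ring_iso_memE(3)) (auto simp: carrier_A_ring)
  finally show ?thesis
    by (simp add: F' G' A_ring_add_cls transport_Phi Phi_add flip: Phi_add)
qed

lemma transport_mult: "transport \<sigma> (Phi F * Phi G) = transport \<sigma> (Phi F) * transport \<sigma> (Phi G)"
proof -
  obtain F' G' where F': "\<sigma> (cls r F) = cls r F'" and G': "\<sigma> (cls r G) = cls r G'"
    using kalg_aut_cls by metis
  have "\<sigma> (cls r (F * G)) = \<sigma> (monoid.mult (A_ring r) (cls r F) (cls r G))"
    by (simp add: A_ring_mult_cls)
  also have "\<dots> = monoid.mult (A_ring r) (\<sigma> (cls r F)) (\<sigma> (cls r G))"
    using \<sigma> unfolding kalg_aut_def by (intro ring_iso_memE(2)) (auto simp: carrier_A_ring)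
  finally show ?thesis
    by (simp add: F' G' A_ring_mult_cls transport_Phi flip: Phi_mult)
qed

lemma transport_inj:
  assumes "transport \<sigma> (Phi F) = transport \<sigma> (Phi G)"
  shows "Phi F = Phi G"
proof -
  obtain F' G' where F': "\<sigma> (cls r F) = cls r F'" and G': "\<sigma> (cls r G) = cls r G'"
    using kalg_aut_cls by metis
  have "inj_on \<sigma> (carrier (A_ring r))"
    using \<sigma> unfolding kalg_aut_def ring_iso_def bij_betw_def by blast
  moreover have "\<sigma> (cls r F) = \<sigma> (cls r G)"
    using assms by (simp add: transport_Phi F' G' cls_eq_cls_iff_Phi)
  ultimately have "cls r F = cls r G"
    by (auto simp: carrier_A_ring dest: inj_onD)
  then show ?thesis
    by (simp add: cls_eq_cls_iff_Phi)
qed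

lemma transport_scalar:
  "transport \<sigma> (Phi (fps_const (fps_const c))) = Phi (fps_const (fps_const c))"
  using \<sigma> by (simp add: transport_Phi kalg_aut_def)

end

lemma transport_involution:
  assumes "nontriv_involution r \<sigma>"
  shows "transport \<sigma> (transport \<sigma> (Phi F)) = Phi F"
proof -
  obtain F' where F': "\<sigma> (cls r F) = cls r F'"
    using assms kalg_aut_cls unfolding nontriv_involution_def by metis
  have "\<sigma> (\<sigma> (cls r F)) = cls r F"
    using assms by (auto simp: nontriv_involution_def carrier_A_ring)
  then show ?thesis
    by (simp add: transport_Phi F')
qed

lemma transport_nontrivial:
  assumes "nontriv_involution r \<sigma>"
  obtains F where "transport \<sigma> (Phi F) \<noteq> Phi F"
proof -
  obtain F where F: "\<sigma> (cls r F) \<noteq> cls r F"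
    using assms by (auto simp: nontriv_involution_def carrier_A_ring)
  obtain F' where F': "\<sigma> (cls r F) = cls r F'"
    using assms kalg_aut_cls unfolding nontriv_involution_def by metis
  show ?thesis
    using F F' that[of F] by (simp add: transport_Phi cls_eq_cls_iff_Phi)
qed

definition induced :: "('b \<Rightarrow> 'b) \<Rightarrow> 'a fps fps set \<Rightarrow> 'a fps fps set" where
  "induced t C = cls r (lift (t (embed C)))"

context
  fixes t ti :: "'b \<Rightarrow> 'b"
  assumes t_in_range: "\<And>F. t (Phi F) \<in> range Phi" and ti_in_range: "\<And>F. ti (Phi F) \<in> range Phi"
    and t_ti: "\<And>x. t (ti x) = x" and ti_t: "\<And>x. ti (t x) = x"
    and t_add: "\<And>x y. t (x + y) = t x + t y" and t_mult: "\<And>x y. t (x * y) = t x * t y"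
    and t_scalar: "\<And>c. t (Phi (fps_const (fps_const c))) = Phi (fps_const (fps_const c))"
begin

lemma induced_cls: "induced t (cls r F) = cls r (lift (t (Phi F)))"
  by (simp add: induced_def)

lemma inj_on_induced: "inj_on (induced t) (carrier (A_ring r))"
proof (rule inj_onI)
  fix C D assume "C \<in> carrier (A_ring r)" "D \<in> carrier (A_ring r)" "induced t C = induced t D"
  then obtain F G where "C = cls r F" "D = cls r G" "t (Phi F) = t (Phi G)"
    by (auto simp: carrier_A_ring induced_cls cls_eq_cls_iff_Phi t_in_range)
  then show "C = D"
    by (metis cls_eq_cls_iff_Phi ti_t)
qed

lemma induced_lift_ti: "induced t (cls r (lift (ti (Phi F)))) = cls r F"
  by (simp add: induced_cls cls_eq_cls_iff_Phi ti_in_range t_ti)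

lemma kalg_aut_induced: "kalg_aut r (induced t)"
proof -
  have "induced t ` carrier (A_ring r) = carrier (A_ring r)"
    by (auto simp: carrier_A_ring induced_cls) (metis rangeI image_eqI induced_lift_ti)
  then have bij: "bij_betw (induced t) (carrier (A_ring r)) (carrier (A_ring r))"
    by (rule bij_betw_imageI[OF inj_on_induced])
  have one: "t 1 = 1"
    using t_scalar[of 1] by (simp add: Phi_one)
  have "induced t \<in> ring_iso (A_ring r) (A_ring r)"
  proof (rule ring_iso_memI)
    fix C :: "'a fps fps set" assume "C \<in> carrier (A_ring r)"
    then show "induced t C \<in> carrier (A_ring r)"
      by (auto simp: carrier_A_ring induced_cls)
  next
    fix C D :: "'a fps fps set" assume "C \<in> carrier (A_ring r)" "D \<in> carrier (A_ring r)"
    then obtain F G where "C = cls r F" "D = cls r G"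
      by (auto simp: carrier_A_ring)
    moreover have "t (Phi F) * t (Phi G) \<in> range Phi" "t (Phi F) + t (Phi G) \<in> range Phi"
      using t_in_range[of "F * G"] t_in_range[of "F + G"] by (simp_all add: Phi_mult Phi_add t_mult t_add)
    ultimately show "induced t (monoid.mult (A_ring r) C D) = monoid.mult (A_ring r) (induced t C) (induced t D)"
      and "induced t (ring.add (A_ring r) C D) = ring.add (A_ring r) (induced t C) (induced t D)"
      by (simp_all add: A_ring_mult_cls A_ring_add_cls induced_cls cls_eq_cls_iff_Phi Phi_mult Phi_add
          t_in_range t_mult t_add)
  next
    show "induced t (monoid.one (A_ring r)) = monoid.one (A_ring r)"
      using Phi_lift[of 1] Phi_one by (simp add: A_ring_one induced_cls cls_eq_cls_iff_Phi one rangeI)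
  qed (rule bij)
  then show ?thesis
    by (simp add: kalg_aut_def induced_cls cls_eq_cls_iff_Phi t_scalar)
qed

lemma inv_into_induced: "inv_into (carrier (A_ring r)) (induced t) (cls r F) = cls r (lift (ti (Phi F)))"
  by (rule inv_into_f_eq[OF inj_on_induced]) (auto simp: carrier_A_ring induced_lift_ti)

text \<open>Conjugating by the automorphism induced by \<open>t\<close> turns \<open>\<sigma>\<close> into \<open>t \<circ> transport \<sigma> \<circ> t\<inverse>\<close>;
  so it suffices to compute the latter on the images of \<open>x\<close> and \<open>y\<close>.\<close>

lemma conjugate_toI:
  assumes \<sigma>: "kalg_aut r \<sigma>"
    and Gx: "t (transport \<sigma> (ti (Phi Xv))) = Phi Gx"
    and Gy: "t (transport \<sigma> (ti (Phi Yv))) = Phi Gy"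
  shows "conjugate_to r \<sigma> Gx Gy"
proof -
  have "induced t (\<sigma> (inv_into (carrier (A_ring r)) (induced t) (cls r F))) =
      cls r (lift (t (transport \<sigma> (ti (Phi F)))))" for F
  proof -
    obtain F' where "\<sigma> (cls r (lift (ti (Phi F)))) = cls r F'"
      using kalg_aut_cls[OF \<sigma>] by metis
    then show ?thesis
      by (simp add: inv_into_induced induced_cls transport_def)
  qed
  then show ?thesis
    unfolding conjugate_to_def using kalg_aut_induced Gx Gy
    by (intro exI[of _ "induced t"]) (simp add: Let_def cls_eq_cls_iff_Phi)
qed

end

end

lemma A_rel_division:
  fixes F :: "'a::field fps fps"
  obtains Q a b where "F = Q * A_rel r + fps_const a + fps_const b * Yv"
proof -
  define Z :: "'a fps" where "Z = fps_X ^ (r + 1)"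
  have Z0: "Z $ 0 = 0" by (simp add: Z_def)
  define D where "D k = eval_y (Abs_fps (\<lambda>j. F $ (2 * j + k))) Z" for k
  have D_unfold: "D k = F $ k + Z * D (k + 2)" for k
  proof -
    have "fps_shift 1 (Abs_fps (\<lambda>j. F $ (2 * j + k))) = Abs_fps (\<lambda>j. F $ (2 * j + (k + 2)))"
      by (simp add: fps_eq_iff algebra_simps)
    then show ?thesis
      unfolding D_def by (subst eval_y_unfold[OF Z0]) simp
  qed
  define Q where "Q = Abs_fps (\<lambda>n. D (n + 2))"
  have "F = Q * A_rel r + fps_const (D 0) + fps_const (D 1) * Yv"
  proof (subst fps_eq_iff, intro allI)
    fix n
    have "\<not> n < 2 \<Longrightarrow> Suc (Suc (n - 2)) = n" by simp
    then have "(Q * A_rel r) $ n = (if n < 2 then 0 else D n) - Z * D (n + 2)"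
      by (simp add: A_rel_def Q_def Yv_def Xv_def Z_def algebra_simps fps_X_power_mult_right_nth
          fps_X_power_mult_nth)
    then show "F $ n = (Q * A_rel r + fps_const (D 0) + fps_const (D 1) * Yv) $ n"
      using D_unfold[of n] by (cases "n = 0"; cases "n = 1") (auto simp: Yv_def fps_X_mult_right_nth)
  qed
  then show ?thesis
    using that by blast
qed

section \<open>Even \<open>r\<close>\<close>

lemma fps_compose_X2_nth:
  "(a oo fps_X ^ 2) $ k = (if even k then a $ (k div 2) else (0::'a::comm_ring_1))"
proof -
  have "(a oo fps_X ^ 2) $ k = (\<Sum>i = 0..k. if k = 2 * i then a $ i else 0)"
    unfolding fps_compose_nth by (rule sum.cong) (auto simp: power_mult[symmetric] fps_X_power_nth)
  also have "\<dots> = (\<Sum>i \<in> {0..k} \<inter> {i. k = 2 * i}. a $ i)"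
    by (simp add: sum.inter_restrict)
  also have "{0..k} \<inter> {i. k = 2 * i} = (if even k then {k div 2} else {})"
    by auto
  finally show ?thesis
    by simp
qed

definition Phi_even :: "nat \<Rightarrow> 'a::field fps fps \<Rightarrow> 'a fps" where
  "Phi_even r F = subst2 F (fps_X ^ 2) (fps_X ^ (r + 1))"

lemma Phi_even_simps:
  "Phi_even r (F + G) = Phi_even r F + Phi_even r G"
  "Phi_even r (F * G) = Phi_even r F * Phi_even r G"
  "Phi_even r 1 = 1"
  "Phi_even r Xv = fps_X ^ 2"
  "Phi_even r Yv = fps_X ^ (r + 1)"
  "Phi_even r (fps_const a) = a oo fps_X ^ 2"
  by (simp_all add: Phi_even_def subst2_add subst2_mult subst2_one subst2_Xv subst2_Yv subst2_const)

lemma Phi_even_A_rel: "Phi_even r (A_rel r) = 0"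
proof -
  have diff: "Phi_even r (F - G) = Phi_even r F - Phi_even r G" for F G
    using Phi_even_simps(1)[of r "F - G" G] by (simp add: algebra_simps)
  have power: "Phi_even r (F ^ n) = Phi_even r F ^ n" for F n
    by (induction n) (simp_all add: Phi_even_simps)
  have "Phi_even r (A_rel r) = (fps_X ^ (r + 1)) ^ 2 - (fps_X ^ 2) ^ (r + 1)"
    by (simp only: A_rel_def diff power Phi_even_simps)
  then show ?thesis
    by (simp only: power_mult[symmetric] mult.commute diff_self)
qed

text \<open>For even \<open>r\<close>, \<open>x \<mapsto> t^2, y \<mapsto> t^(r+1)\<close> embeds \<open>A_r\<close> into \<open>k[[t]]\<close>: on a
  normal form \<open>a(x) + b(x) y\<close> the two summands only contribute to even, resp. odd, powers of \<open>t\<close>.\<close>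

lemma A_model_Phi_even:
  assumes "even r"
  shows "A_model r (Phi_even r :: 'a::field fps fps \<Rightarrow> 'a fps)"
proof
  fix F :: "'a fps fps"
  show "Phi_even r F = 0 \<longleftrightarrow> A_rel r dvd F"
  proof
    assume "A_rel r dvd F"
    then show "Phi_even r F = 0"
      by (auto simp: Phi_even_simps Phi_even_A_rel elim!: dvdE)
  next
    assume F0: "Phi_even r F = 0"
    obtain Q a b where F: "F = Q * A_rel r + fps_const a + fps_const b * Yv"
      using A_rel_division by blast
    have sum0: "(a oo fps_X ^ 2) + (b oo fps_X ^ 2) * fps_X ^ (r + 1) = 0"
      using F0 unfolding F by (simp del: power_Suc add: Phi_even_simps Phi_even_A_rel)
    have "a $ n = 0" for n
    proof -
      have "((a oo fps_X ^ 2) + (b oo fps_X ^ 2) * fps_X ^ (r + 1)) $ (2 * n) = 0"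
        using sum0 by simp
      moreover have "odd (2 * n - (r + 1))" if "\<not> 2 * n < r + 1"
        using assms that by simp
      ultimately show ?thesis
        by (auto simp del: power_Suc simp: fps_X_power_mult_right_nth fps_compose_X2_nth split: if_splits)
    qed
    moreover have "b $ n = 0" for n
    proof -
      have "((a oo fps_X ^ 2) + (b oo fps_X ^ 2) * fps_X ^ (r + 1)) $ (2 * n + (r + 1)) = 0"
        using sum0 by simp
      then show ?thesis
        using assms by (auto simp del: power_Suc simp: fps_X_power_mult_right_nth fps_compose_X2_nth split: if_splits)
    qed
    ultimately have "a = 0" "b = 0"
      by (simp_all add: fps_eq_iff)
    then show "A_rel r dvd F"
      using F by simp
  qed
qed (simp_all add: Phi_even_simps)

definition even_image :: "nat \<Rightarrow> 'a::field fps set" where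
  "even_image r = {f. fps_agree (r + 1) (f oo - fps_X) f}"

lemma Phi_even_compose:
  assumes "t $ 0 = 0"
  shows "Phi_even r F oo t = subst2 F (t ^ 2) (t ^ (r + 1))"
  unfolding Phi_even_def
  by (subst subst2_compose) (simp_all add: assms fps_X_power_compose del: power_Suc)

lemma compose_in_even_image:
  assumes t0: "t $ 0 = 0" and t2: "t ^ 2 \<in> even_image r"
  shows "Phi_even r F oo t \<in> even_image r"
proof -
  have "(Phi_even r F oo t) oo - fps_X = subst2 F (t ^ 2 oo - fps_X) (t ^ (r + 1) oo - fps_X)"
    unfolding Phi_even_compose[OF t0]
    by (rule subst2_compose) (simp_all add: t0 fps_nth_power_0 del: power_Suc)
  moreover have "fps_agree (r + 1) (subst2 F (t ^ 2 oo - fps_X) (t ^ (r + 1) oo - fps_X))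
      (subst2 F (t ^ 2) (t ^ (r + 1)))"
  proof (rule subst2_agree)
    have "fps_agree (r + 1) ((t oo - fps_X) ^ (r + 1)) 0" "fps_agree (r + 1) (t ^ (r + 1)) 0"
      by (simp_all add: fps_agree_power_zero t0 del: power_Suc)
    moreover have "t ^ (r + 1) oo - fps_X = (t oo - fps_X) ^ (r + 1)"
      by (simp add: fps_compose_power del: power_Suc)
    ultimately show "fps_agree (r + 1) (t ^ (r + 1) oo - fps_X) (t ^ (r + 1))"
      by (metis fps_agree_sym fps_agree_trans)
  qed (use t2 in \<open>simp_all add: even_image_def t0 fps_nth_power_0 del: power_Suc\<close>)
  ultimately show ?thesis
    by (simp add: even_image_def Phi_even_compose[OF t0] del: power_Suc)
qed

lemma Phi_even_in_even_image: "Phi_even r F \<in> even_image r"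
  using compose_in_even_image[of fps_X r F]
  by (simp add: even_image_def fps_agree_def fps_compose_uminus' fps_X_power_nth)

lemma even_image_odd_nth_eq_0:
  assumes "f \<in> even_image r" "(2::'a::field) \<noteq> 0" "odd n" "n < r + 1"
  shows "f $ n = (0::'a)"
proof -
  have "(f oo - fps_X) $ n = f $ n"
    using assms(1,4) by (simp add: even_image_def fps_agree_def)
  then have "2 * f $ n = 0"
    using assms(3) by (simp add: fps_compose_uminus' algebra_simps mult_2)
  then show ?thesis
    using assms(2) by simp
qed

lemma range_Phi_even:
  assumes "even r" "(2::'a::field) \<noteq> 0"
  shows "range (Phi_even r :: 'a fps fps \<Rightarrow> 'a fps) = even_image r"
proof (intro equalityI subsetI)
  fix f :: "'a fps"
  assume f: "f \<in> even_image r"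
  define a where "a = Abs_fps (\<lambda>n. f $ (2 * n))"
  define b where "b = Abs_fps (\<lambda>n. f $ (2 * n + r + 1))"
  have "Phi_even r (fps_const a + fps_const b * Yv) $ k = f $ k" for k
  proof -
    have "Phi_even r (fps_const a + fps_const b * Yv) $ k =
        (a oo fps_X ^ 2) $ k + ((b oo fps_X ^ 2) * fps_X ^ (r + 1)) $ k"
      by (simp add: Phi_even_simps del: power_Suc)
    also have "\<dots> = f $ k"
    proof (cases "even k")
      case True
      then have "odd (k - (r + 1))" if "\<not> k < r + 1"
        using assms(1) that by simp
      then show ?thesis
        using True by (simp add: fps_compose_X2_nth fps_X_power_mult_right_nth a_def del: power_Suc)
    next
      case odd: False
      show ?thesis
      proof (cases "k < r + 1")
        case True
        then show ?thesis
          using odd even_image_odd_nth_eq_0[OF f assms(2) odd True]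
          by (simp add: fps_compose_X2_nth fps_X_power_mult_right_nth del: power_Suc)
      next
        case False
        then have "even (k - (r + 1))" "2 * ((k - (r + 1)) div 2) + r + 1 = k"
          using odd assms(1) by auto
        then show ?thesis
          using odd False by (simp add: fps_compose_X2_nth fps_X_power_mult_right_nth b_def del: power_Suc)
      qed
    qed
    finally show ?thesis .
  qed
  then show "f \<in> range (Phi_even r)"
    by (metis fps_ext rangeI)
qed (auto simp: Phi_even_in_even_image)

lemma fps_const_neg_one_mult [simp]: "fps_const (- 1 :: 'a::comm_ring_1) * f = - f"
  by (simp add: fps_eq_iff)

lemma fps_compose_nth_1: "b $ 0 = 0 \<Longrightarrow> (a oo b) $ 1 = a $ 1 * (b $ 1 :: 'a::field)"
  by (simp add: fps_compose_nth)

lemma fps_inv_nth_0 [simp]: "fps_inv a $ 0 = 0"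
  by (simp add: fps_inv_def)

lemma fps_inv_agree:
  fixes a b :: "'a::field fps"
  assumes a0: "a $ 0 = 0" and a1: "a $ 1 \<noteq> 0" and b0: "b $ 0 = 0" and b1: "b $ 1 \<noteq> 0"
    and ab: "fps_agree N a b"
  shows "fps_agree N (fps_inv a) (fps_inv b)"
proof -
  have "fps_inv a = (fps_inv a oo b) oo fps_inv b"
    by (simp add: fps_compose_assoc[symmetric] b0 fps_inv_right[OF b0 b1])
  moreover have "fps_agree N ((fps_inv a oo b) oo fps_inv b) ((fps_inv a oo a) oo fps_inv b)"
    by (intro fps_agree_compose_left fps_agree_compose_right fps_agree_sym[OF ab])
  ultimately show ?thesis
    using b0 by (simp add: fps_inv[OF a0 a1])
qed

lemma fps_agree_cancel_left:
  fixes d z :: "'a::field fps"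
  assumes "fps_agree (Suc k) (d * z) 0" and "d $ 0 = 0" and "d $ 1 \<noteq> 0"
  shows "fps_agree k z 0"
proof -
  define w where "w = fps_shift 1 d"
  have "d = fps_X * w"
    using assms(2) by (simp add: w_def fps_eq_iff)
  then have "fps_agree k (w * z) 0"
    using assms(1) unfolding fps_agree_def by (auto simp: mult.assoc)
  then have "fps_agree k (inverse w * (w * z)) 0"
    by (rule fps_agree_mult_zero_right)
  moreover have "w $ 0 \<noteq> 0"
    using assms(3) by (simp add: w_def)
  ultimately show ?thesis
    by (simp add: mult.assoc[symmetric] inverse_mult_eq_1)
qed

text \<open>The odd power series are the fixed points of \<open>fps_reflect\<close>.\<close>

definition fps_reflect :: "'a::comm_ring_1 fps \<Rightarrow> 'a fps" where
  "fps_reflect v = - (v oo - fps_X)"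

lemma fps_reflect_nth: "fps_reflect v $ n = - ((-1) ^ n * v $ n)"
  by (simp add: fps_reflect_def fps_compose_uminus')

lemma fps_reflect_X [simp]: "fps_reflect fps_X = (fps_X :: 'a::field fps)"
  by (simp add: fps_reflect_def)

lemma fps_reflect_compose:
  fixes a b :: "'a::field fps"
  assumes "a $ 0 = 0" "b $ 0 = 0"
  shows "fps_reflect (a oo b) = fps_reflect a oo fps_reflect b"
proof -
  have "fps_reflect a oo fps_reflect b = - ((a oo - fps_X) oo fps_reflect b)"
    by (simp add: fps_reflect_def fps_compose_uminus)
  also have "(a oo - fps_X) oo fps_reflect b = a oo ((- fps_X) oo fps_reflect b)"
    using assms by (intro fps_compose_assoc[symmetric]) (simp_all add: fps_reflect_nth)
  also have "(- fps_X) oo fps_reflect b = b oo - fps_X"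
    using assms by (simp add: fps_reflect_def fps_compose_uminus)
  also have "a oo (b oo - fps_X) = (a oo b) oo - fps_X"
    by (rule fps_compose_assoc) (simp_all add: assms)
  finally show ?thesis
    by (simp add: fps_reflect_def)
qed

lemma fps_reflect_inv_agree:
  fixes u :: "'a::field fps"
  assumes u0: "u $ 0 = 0" and u1: "u $ 1 \<noteq> 0" and u: "fps_agree N (fps_reflect u) u"
  shows "fps_agree N (fps_reflect (fps_inv u)) (fps_inv u)"
proof -
  let ?t = "fps_inv u"
  have "fps_reflect ?t = (fps_reflect ?t oo u) oo ?t"
    by (simp add: fps_compose_assoc[symmetric] u0 fps_inv_right[OF u0 u1])
  moreover have "fps_agree N ((fps_reflect ?t oo u) oo ?t) ((fps_reflect ?t oo fps_reflect u) oo ?t)"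
    by (intro fps_agree_compose_left fps_agree_compose_right fps_agree_sym[OF u])
  moreover have "fps_reflect ?t oo fps_reflect u = fps_X"
    by (simp add: fps_reflect_compose[symmetric] u0 fps_inv[OF u0 u1])
  ultimately show ?thesis
    by simp
qed

lemma power2_in_even_image:
  assumes v0: "v $ 0 = 0" and v: "fps_agree r (fps_reflect v) v"
  shows "v ^ 2 \<in> even_image r"
proof -
  have "fps_agree (r + 1) ((fps_reflect v - v) * (fps_reflect v + v)) 0"
    using v v0 by (intro fps_agree_mult_zero) (simp_all add: fps_reflect_nth flip: fps_agree_iff_diff)
  moreover have "(fps_reflect v - v) * (fps_reflect v + v) = (v oo - fps_X) ^ 2 - v ^ 2"
    by (simp add: fps_reflect_def power2_eq_square algebra_simps)
  moreover have "(v oo - fps_X) ^ 2 = v ^ 2 oo - fps_X"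
    by (simp add: fps_compose_power)
  ultimately show ?thesis
    by (simp add: even_image_def fps_agree_iff_diff[of _ "v ^ 2 oo - fps_X"])
qed

text \<open>Conversely, if \<open>v\<^sup>2\<close> is even modulo \<open>t^(r+1)\<close>, then
  \<open>(v(-t) - v(t)) (v(-t) + v(t)) \<equiv> 0\<close>, and the first factor is \<open>t\<close> times a unit.\<close>

lemma fps_reflect_agree_if_power2_in_even_image:
  fixes v :: "'a::field fps"
  assumes v0: "v $ 0 = 0" and v1: "v $ 1 \<noteq> 0" and two: "(2::'a) \<noteq> 0"
    and v2: "v ^ 2 \<in> even_image r"
  shows "fps_agree r (fps_reflect v) v"
proof -
  let ?v' = "v oo - fps_X"
  have "(?v' - v) * (?v' + v) = ?v' ^ 2 - v ^ 2"
    by (simp add: power2_eq_square algebra_simps)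
  also have "?v' ^ 2 = v ^ 2 oo - fps_X"
    by (simp add: fps_compose_power)
  finally have "fps_agree (Suc r) ((?v' - v) * (?v' + v)) 0"
    using v2 by (simp add: even_image_def flip: fps_agree_iff_diff)
  moreover have "(?v' - v) $ 1 \<noteq> 0"
    using v1 two by (simp add: fps_compose_uminus' flip: mult_2)
  ultimately have "fps_agree r (?v' + v) 0"
    using v0 by (intro fps_agree_cancel_left[of r "?v' - v"]) simp_all
  then show ?thesis
    by (simp add: fps_agree_def fps_reflect_def add_eq_0_iff)
qed

lemma fps_involution_nth_1:
  fixes \<phi> :: "'a::field fps"
  assumes "\<phi> $ 0 = 0" "\<phi> oo \<phi> = fps_X"
  shows "\<phi> $ 1 * \<phi> $ 1 = 1"
  using fps_compose_nth_1[OF assms(1), of \<phi>] assms(2) by simp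

lemma fps_involution_linearize:
  fixes \<phi> :: "'a::field fps"
  assumes \<phi>0: "\<phi> $ 0 = 0" and \<phi>\<phi>: "\<phi> oo \<phi> = fps_X" and two: "(2::'a) \<noteq> 0"
  defines "u \<equiv> fps_const (inverse 2) * (fps_X + fps_const (\<phi> $ 1) * \<phi>)"
  shows "u $ 0 = 0" "u $ 1 = 1" "u oo \<phi> = fps_const (\<phi> $ 1) * u"
proof -
  have cc: "\<phi> $ 1 * \<phi> $ 1 = 1"
    by (rule fps_involution_nth_1[OF \<phi>0 \<phi>\<phi>])
  show "u $ 0 = 0"
    by (simp add: u_def \<phi>0)
  show "u $ 1 = 1"
    using cc two by (simp add: u_def)
  have "u oo \<phi> = fps_const (inverse 2) * (\<phi> + fps_const (\<phi> $ 1) * fps_X)"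
    by (simp add: u_def fps_compose_mult_distrib[OF \<phi>0] fps_compose_add_distrib \<phi>\<phi> \<phi>0)
  also have "\<dots> = fps_const (inverse 2) * (fps_const (\<phi> $ 1 * \<phi> $ 1) * \<phi> + fps_const (\<phi> $ 1) * fps_X)"
    using cc by simp
  finally show "u oo \<phi> = fps_const (\<phi> $ 1) * u"
    by (simp add: u_def algebra_simps)
qed

lemma fps_involution_eq_X:
  fixes \<phi> :: "'a::field fps"
  assumes \<phi>0: "\<phi> $ 0 = 0" and \<phi>\<phi>: "\<phi> oo \<phi> = fps_X" and \<phi>1: "\<phi> $ 1 = 1" and two: "(2::'a) \<noteq> 0"
  shows "\<phi> = fps_X"
proof -
  define u where "u = fps_const (inverse 2) * (fps_X + fps_const (\<phi> $ 1) * \<phi>)"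
  have u: "u $ 0 = 0" "u $ 1 \<noteq> 0" "u oo \<phi> = u"
    using fps_involution_linearize[OF \<phi>0 \<phi>\<phi> two] \<phi>1 unfolding u_def by simp_all
  have "\<phi> = (fps_inv u oo u) oo \<phi>"
    by (simp add: fps_inv[OF u(1,2)] \<phi>0)
  also have "\<dots> = fps_inv u oo (u oo \<phi>)"
    by (rule fps_compose_assoc[symmetric]) (simp_all add: \<phi>0 u)
  finally show ?thesis
    by (simp add: u fps_inv[OF u(1,2)])
qed

lemma fps_cusp_parametrization:
  fixes g h :: "'a::field fps"
  assumes gh: "h ^ 2 = g ^ (2 * m + 1)" and g: "g \<noteq> 0"
  obtains \<phi> where "\<phi> ^ 2 = g" "\<phi> ^ (2 * m + 1) = h"
proof -
  have h: "h \<noteq> 0"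
    using gh g by (metis power_not_zero zero_power2)
  have "subdegree (h ^ 2) = subdegree (g ^ (2 * m + 1))"
    using gh by simp
  then have "2 * subdegree h = (2 * m + 1) * subdegree g"
    by (simp del: power_Suc)
  then have "m * subdegree g \<le> subdegree h"
    by (simp add: algebra_simps)
  then have "g ^ m dvd h"
    using g h by (subst fps_dvd_iff) auto
  then obtain \<phi> where h\<phi>: "h = g ^ m * \<phi>"
    by (auto elim: dvdE)
  have "g ^ (2 * m) * \<phi> ^ 2 = g ^ (2 * m) * g"
    using gh unfolding h\<phi> by (simp add: power_mult_distrib power_mult[symmetric] mult.commute)
  then have \<phi>2: "\<phi> ^ 2 = g"
    using g by simp
  have "\<phi> ^ (2 * m + 1) = (\<phi> ^ 2) ^ m * \<phi>"
    by (simp add: power_mult)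
  then have "\<phi> ^ (2 * m + 1) = h"
    by (simp add: \<phi>2 h\<phi>)
  with \<phi>2 show ?thesis
    using that by blast
qed

lemma even_transport_eq_compose:
  fixes \<sigma> :: "'a::field fps fps set \<Rightarrow> 'a fps fps set"
  assumes r: "even r" and \<sigma>: "kalg_aut r \<sigma>"
  obtains \<phi> where "\<phi> $ 0 = 0"
    and "\<And>F. A_model.transport r (Phi_even r) \<sigma> (Phi_even r F) = Phi_even r F oo \<phi>"
proof -
  interpret E: A_model r "Phi_even r :: 'a fps fps \<Rightarrow> 'a fps"
    by (rule A_model_Phi_even[OF r])
  define b where "b F = E.transport \<sigma> (Phi_even r F)" for F
  have Phi_even_scalar: "Phi_even r (fps_const (fps_const c)) = fps_const c" for c :: 'a
    by (simp add: Phi_even_simps)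
  have b: "kalg_hom b"
    unfolding kalg_hom_def b_def
    using E.transport_add[OF \<sigma>] E.transport_mult[OF \<sigma>] E.transport_scalar[OF \<sigma>]
    by (simp add: Phi_even_simps(1,2) Phi_even_scalar)
  obtain m where m: "r = 2 * m"
    using r by blast
  have "b Xv \<noteq> 0"
  proof
    assume "b Xv = 0"
    then have "b Xv = b 0"
      by (simp add: kalg_hom_zero[OF b])
    then have "Phi_even r Xv = Phi_even r (0 :: 'a fps fps)"
      unfolding b_def by (rule E.transport_inj[OF \<sigma>])
    then show False
      by (simp add: Phi_even_simps E.Phi_zero)
  qed
  moreover have "b (Yv ^ 2) = b (Xv ^ (r + 1))"
    using E.Phi_A_rel by (simp add: b_def)
  then have "b Yv ^ 2 = b Xv ^ (2 * m + 1)"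
    by (simp add: kalg_hom_power[OF b] m del: power_Suc)
  ultimately obtain \<phi> where \<phi>2: "\<phi> ^ 2 = b Xv" and \<phi>r: "\<phi> ^ (r + 1) = b Yv"
    using fps_cusp_parametrization m by metis
  have "(\<phi> ^ 2) $ 0 = 0"
    using \<phi>2 kalg_hom_Xv_nth_0[OF b] by simp
  then have \<phi>0: "\<phi> $ 0 = 0"
    by (simp add: fps_nth_power_0)
  have "b F = subst2 F (\<phi> ^ 2) (\<phi> ^ (r + 1))" for F
    unfolding \<phi>2 \<phi>r
    by (rule kalg_hom_eqI[OF b kalg_hom_subst2])
      (simp_all add: kalg_hom_Xv_nth_0[OF b] kalg_hom_Yv_nth_0[OF b] subst2_Xv subst2_Yv)
  then show ?thesis
    using that[OF \<phi>0] unfolding b_def Phi_even_compose[OF \<phi>0] by blast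
qed

lemma even_transport_involution:
  fixes \<sigma> :: "'a::field fps fps set \<Rightarrow> 'a fps fps set"
  assumes r: "even r" and two: "(2::'a) \<noteq> 0" and \<sigma>: "nontriv_involution r \<sigma>"
    and \<phi>0: "\<phi> $ 0 = 0"
    and \<phi>: "\<And>F. A_model.transport r (Phi_even r) \<sigma> (Phi_even r F) = Phi_even r F oo \<phi>"
  shows "\<phi> oo \<phi> = fps_X" and "\<phi> $ 1 = -1"
proof -
  interpret E: A_model r "Phi_even r :: 'a fps fps \<Rightarrow> 'a fps"
    by (rule A_model_Phi_even[OF r])
  have \<phi>\<phi>: "(Phi_even r F oo \<phi>) oo \<phi> = Phi_even r F" for F
  proof -
    obtain G where G: "Phi_even r F oo \<phi> = Phi_even r G"
      using E.transport_in_range[of \<sigma> F] \<sigma> \<phi> by (auto simp: nontriv_involution_def)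
    have "Phi_even r F = E.transport \<sigma> (E.transport \<sigma> (Phi_even r F))"
      using E.transport_involution[OF \<sigma>] by simp
    also have "\<dots> = Phi_even r G oo \<phi>"
      by (simp add: \<phi> G)
    finally show ?thesis
      unfolding G by (rule sym)
  qed
  have "fps_X ^ k oo (\<phi> oo \<phi>) = (fps_X ^ k oo \<phi>) oo \<phi>" for k
    by (simp add: fps_compose_assoc \<phi>0)
  then have sq: "(\<phi> oo \<phi>) ^ 2 = fps_X ^ 2" and "(\<phi> oo \<phi>) ^ (r + 1) = fps_X ^ (r + 1)"
    using \<phi>\<phi>[of Xv] \<phi>\<phi>[of Yv] by (simp_all add: Phi_even_simps fps_X_power_compose \<phi>0 del: power_Suc)
  moreover obtain m where "r = 2 * m"
    using r by blast
  ultimately have "(\<phi> oo \<phi>) * ((\<phi> oo \<phi>) ^ 2) ^ m = fps_X * (fps_X ^ 2) ^ m"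
    by (simp only: Suc_eq_plus1[symmetric] power_Suc power_mult)
  then show \<phi>\<phi>X: "\<phi> oo \<phi> = fps_X"
    unfolding sq by simp
  have "\<phi> $ 1 = 1 \<or> \<phi> $ 1 = -1"
    using fps_involution_nth_1[OF \<phi>0 \<phi>\<phi>X] by (simp add: square_eq_1_iff)
  moreover have "\<phi> $ 1 \<noteq> 1"
  proof
    assume "\<phi> $ 1 = 1"
    then have "\<phi> = fps_X"
      by (rule fps_involution_eq_X[OF \<phi>0 \<phi>\<phi>X _ two])
    then show False
      using E.transport_nontrivial[OF \<sigma>] \<phi> by auto
  qed
  ultimately show "\<phi> $ 1 = -1"
    by simp
qed

lemma fps_involution_linearize_odd:
  fixes \<phi> :: "'a::field fps"
  assumes \<phi>0: "\<phi> $ 0 = 0" and \<phi>\<phi>: "\<phi> oo \<phi> = fps_X" and \<phi>1: "\<phi> $ 1 = -1"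
    and two: "(2::'a) \<noteq> 0" and \<phi>2: "\<phi> ^ 2 \<in> even_image r"
  obtains u where "u $ 0 = 0" "u $ 1 = 1" "u oo \<phi> = - u" "fps_agree r (fps_reflect u) u"
proof -
  define u where "u = fps_const (inverse 2) * (fps_X - \<phi>)"
  have "u $ 0 = 0" "u $ 1 = 1" "u oo \<phi> = - u"
    using fps_involution_linearize[OF \<phi>0 \<phi>\<phi> two] \<phi>1 by (simp_all add: u_def)
  moreover have "fps_agree r (fps_reflect \<phi>) \<phi>"
    using \<phi>0 \<phi>1 two \<phi>2 by (intro fps_reflect_agree_if_power2_in_even_image) simp_all
  then have "fps_agree r (fps_const (inverse 2) * (fps_X - fps_reflect \<phi>)) u"
    unfolding u_def by (intro fps_agree_mult fps_agree_diff fps_agree_refl)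
  then have "fps_agree r (fps_reflect u) u"
    by (simp add: u_def fps_reflect_def fps_compose_mult_distrib fps_compose_sub_distrib algebra_simps)
  ultimately show ?thesis
    using that by blast
qed

text \<open>If \<open>u\<close> is odd up to order \<open>r\<close>, substituting \<open>u\<close> or its inverse preserves the image
  of \<open>A_r\<close>, so conjugation by this substitution is available.\<close>

lemma even_conjugate_to_compose:
  fixes \<sigma> :: "'a::field fps fps set \<Rightarrow> 'a fps fps set" and \<phi> u :: "'a fps"
  assumes r: "even r" and two: "(2::'a) \<noteq> 0" and \<sigma>: "kalg_aut r \<sigma>"
    and \<phi>0: "\<phi> $ 0 = 0"
    and \<phi>: "\<And>F. A_model.transport r (Phi_even r) \<sigma> (Phi_even r F) = Phi_even r F oo \<phi>"
    and u0: "u $ 0 = 0" and u1: "u $ 1 \<noteq> 0" and u: "fps_agree r (fps_reflect u) u"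
    and Gx: "Phi_even r Xv oo ((u oo \<phi>) oo fps_inv u) = Phi_even r Gx"
    and Gy: "Phi_even r Yv oo ((u oo \<phi>) oo fps_inv u) = Phi_even r Gy"
  shows "conjugate_to r \<sigma> Gx Gy"
proof -
  interpret E: A_model r "Phi_even r :: 'a fps fps \<Rightarrow> 'a fps"
    by (rule A_model_Phi_even[OF r])
  define \<theta> where "\<theta> = fps_inv u"
  have \<theta>0: "\<theta> $ 0 = 0" and u\<theta>: "u oo \<theta> = fps_X" and \<theta>u: "\<theta> oo u = fps_X"
    using u0 u1 by (simp_all add: \<theta>_def fps_inv fps_inv_right)
  have \<theta>: "fps_agree r (fps_reflect \<theta>) \<theta>"
    unfolding \<theta>_def using u0 u1 u by (intro fps_reflect_inv_agree)
  have compose_in_range: "Phi_even r F oo v \<in> range (Phi_even r)"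
    if "v $ 0 = 0" "fps_agree r (fps_reflect v) v" for v :: "'a fps" and F
    unfolding range_Phi_even[OF r two]
    using that by (intro compose_in_even_image power2_in_even_image)
  have conj: "E.transport \<sigma> (Phi_even r F oo u) oo \<theta> = Phi_even r F oo ((u oo \<phi>) oo \<theta>)" for F
  proof -
    obtain G where G: "Phi_even r F oo u = Phi_even r G"
      using compose_in_range[OF u0 u] by blast
    have "E.transport \<sigma> (Phi_even r G) oo \<theta> = ((Phi_even r F oo u) oo \<phi>) oo \<theta>"
      by (simp only: \<phi> G)
    then show ?thesis
      by (simp add: G fps_compose_assoc \<phi>0 u0 \<theta>0)
  qed
  have "E.transport \<sigma> (Phi_even r Xv oo u) oo \<theta> = Phi_even r Gx"
    and "E.transport \<sigma> (Phi_even r Yv oo u) oo \<theta> = Phi_even r Gy"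
    using conj[of Xv] conj[of Yv] Gx Gy by (simp_all add: \<theta>_def)
  moreover have "Phi_even r (fps_const (fps_const c)) oo \<theta> = Phi_even r (fps_const (fps_const c))" for c
    by (simp add: Phi_even_simps)
  ultimately show ?thesis
    using u0 \<theta>0 u\<theta> \<theta>u u \<theta>
    by (intro E.conjugate_toI[where t = "\<lambda>f. f oo \<theta>" and ti = "\<lambda>f. f oo u"] \<sigma> compose_in_range)
      (simp_all add: fps_compose_assoc[symmetric] fps_compose_add_distrib fps_compose_mult_distrib)
qed

text \<open>\<open>\<sigma>\<close> acts as \<open>f \<mapsto> f \<circ> \<phi>\<close> with \<open>\<phi>'(0) = -1\<close>, and the linearizer of \<open>\<phi>\<close> conjugates \<open>\<phi>\<close>
  to \<open>t \<mapsto> -t\<close>, which fixes \<open>t\<^sup>2\<close> and negates \<open>t^(r+1)\<close>.\<close>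

lemma even_case:
  fixes \<sigma> :: "'a::field fps fps set \<Rightarrow> 'a fps fps set"
  assumes r: "even r" and two: "(2::'a) \<noteq> 0" and \<sigma>: "nontriv_involution r \<sigma>"
  shows "conjugate_to r \<sigma> Xv (- Yv)"
proof -
  interpret E: A_model r "Phi_even r :: 'a fps fps \<Rightarrow> 'a fps"
    by (rule A_model_Phi_even[OF r])
  have \<sigma>': "kalg_aut r \<sigma>"
    using \<sigma> by (simp add: nontriv_involution_def)
  obtain \<phi> where \<phi>0: "\<phi> $ 0 = 0" and \<phi>: "\<And>F. E.transport \<sigma> (Phi_even r F) = Phi_even r F oo \<phi>"
    using even_transport_eq_compose[OF r \<sigma>'] by metis
  have "\<phi> ^ 2 = E.transport \<sigma> (Phi_even r Xv)"
    using \<phi>[of Xv] by (simp add: Phi_even_simps fps_X_power_compose \<phi>0)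
  then have "\<phi> ^ 2 \<in> even_image r"
    using E.transport_in_range[OF \<sigma>'] by (simp add: range_Phi_even[OF r two])
  then obtain u where u0: "u $ 0 = 0" and u1: "u $ 1 = 1" and u\<phi>: "u oo \<phi> = - u"
    and u: "fps_agree r (fps_reflect u) u"
    using fps_involution_linearize_odd[OF \<phi>0 even_transport_involution[OF r two \<sigma> \<phi>0 \<phi>] two]
    by blast
  have \<psi>: "(u oo \<phi>) oo fps_inv u = - fps_X"
    using u0 u1 by (simp add: u\<phi> fps_compose_uminus fps_inv_right)
  show ?thesis
  proof (rule even_conjugate_to_compose[OF r two \<sigma>' \<phi>0 \<phi> u0 _ u])
    show "u $ 1 \<noteq> 0"
      using u1 by simp
    show "Phi_even r Xv oo ((u oo \<phi>) oo fps_inv u) = Phi_even r Xv"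
      unfolding \<psi> by (simp add: Phi_even_simps fps_X_power_compose)
    show "Phi_even r Yv oo ((u oo \<phi>) oo fps_inv u) = Phi_even r (- Yv)"
      unfolding \<psi> using r by (simp add: E.Phi_uminus Phi_even_simps fps_X_power_compose del: power_Suc)
  qed
qed

section \<open>Odd \<open>r\<close>\<close>

text \<open>For odd \<open>r = 2m - 1\<close> the curve \<open>y\<^sup>2 = x^(2m)\<close> has the two branches \<open>y = \<plusminus>x^m\<close>;
  \<open>A_r\<close> embeds into the product of their coordinate rings, two copies of \<open>k[[t]]\<close>.\<close>

datatype 'a fps_pair = FP (fp1: "'a fps") (fp2: "'a fps")

instantiation fps_pair :: (field) comm_ring_1
begin

definition "0 = FP 0 0"
definition "1 = FP 1 1"
definition "x + y = FP (fp1 x + fp1 y) (fp2 x + fp2 y)"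
definition "x - y = FP (fp1 x - fp1 y) (fp2 x - fp2 y)"
definition "- x = FP (- fp1 x) (- fp2 x)"
definition "x * y = FP (fp1 x * fp1 y) (fp2 x * fp2 y)"

instance
  by standard (auto intro!: fps_pair.expand simp: zero_fps_pair_def one_fps_pair_def plus_fps_pair_def
      minus_fps_pair_def uminus_fps_pair_def times_fps_pair_def algebra_simps)

end

lemma fps_pair_simps [simp]:
  "fp1 0 = 0" "fp2 0 = 0" "fp1 1 = 1" "fp2 1 = 1"
  "fp1 (x + y) = fp1 x + fp1 y" "fp2 (x + y) = fp2 x + fp2 y"
  "fp1 (x - y) = fp1 x - fp1 y" "fp2 (x - y) = fp2 x - fp2 y"
  "fp1 (- x) = - fp1 x" "fp2 (- x) = - fp2 x"
  "fp1 (x * y) = fp1 x * fp1 y" "fp2 (x * y) = fp2 x * fp2 y"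
  by (simp_all add: zero_fps_pair_def one_fps_pair_def plus_fps_pair_def minus_fps_pair_def
      uminus_fps_pair_def times_fps_pair_def)

lemma fps_pair_power [simp]: "fp1 (x ^ n) = fp1 x ^ n" "fp2 (x ^ n) = fp2 x ^ n"
  by (induction n) simp_all

lemma fps_pair_eq_iff: "x = y \<longleftrightarrow> fp1 x = fp1 y \<and> fp2 x = fp2 y"
  by (auto intro: fps_pair.expand)

definition Phi_odd :: "nat \<Rightarrow> 'a::field fps fps \<Rightarrow> 'a fps_pair" where
  "Phi_odd m F = FP (subst2 F fps_X (fps_X ^ m)) (subst2 F fps_X (- (fps_X ^ m)))"

lemma Phi_odd_simps:
  assumes "m \<ge> 1"
  shows "Phi_odd m (F + G) = Phi_odd m F + Phi_odd m G"
    "Phi_odd m (F * G) = Phi_odd m F * Phi_odd m G"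
    "Phi_odd m 1 = 1"
    "Phi_odd m Xv = FP fps_X fps_X"
    "Phi_odd m Yv = FP (fps_X ^ m) (- (fps_X ^ m))"
    "Phi_odd m (fps_const a) = FP a a"
  using assms by (simp_all add: Phi_odd_def subst2_add subst2_mult subst2_one subst2_Xv subst2_Yv
      subst2_const fps_pair_eq_iff)

lemma Phi_odd_power: "m \<ge> 1 \<Longrightarrow> Phi_odd m (F ^ n) = Phi_odd m F ^ n"
  by (induction n) (simp_all add: Phi_odd_simps)

lemma Phi_odd_diff: "m \<ge> 1 \<Longrightarrow> Phi_odd m (F - G) = Phi_odd m F - Phi_odd m G"
  using Phi_odd_simps(1)[of m "F - G" G] by (simp add: algebra_simps)

lemma A_model_Phi_odd:
  assumes r: "r + 1 = 2 * m" and two: "(2::'a::field) \<noteq> 0"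
  shows "A_model r (Phi_odd m :: 'a fps fps \<Rightarrow> 'a fps_pair)"
proof -
  have m: "m \<ge> 1"
    using r by simp
  have "Phi_odd m (A_rel r :: 'a fps fps) = FP (fps_X ^ m) (- (fps_X ^ m)) ^ 2 - FP fps_X fps_X ^ (2 * m)"
    unfolding A_rel_def r[symmetric] by (simp only: Phi_odd_diff[OF m] Phi_odd_power[OF m] Phi_odd_simps[OF m])
  then have rel: "Phi_odd m (A_rel r :: 'a fps fps) = 0"
    by (simp add: fps_pair_eq_iff power_mult[symmetric] mult.commute)
  show ?thesis
  proof
    fix F :: "'a fps fps"
    show "Phi_odd m F = 0 \<longleftrightarrow> A_rel r dvd F"
    proof
      assume "A_rel r dvd F"
      then show "Phi_odd m F = 0"
        by (auto simp: Phi_odd_simps[OF m] rel elim!: dvdE)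
    next
      assume F0: "Phi_odd m F = 0"
      obtain Q a b where F: "F = Q * A_rel r + fps_const a + fps_const b * Yv"
        using A_rel_division by blast
      have "Phi_odd m F = FP (a + b * fps_X ^ m) (a - b * fps_X ^ m)"
        unfolding F by (simp add: Phi_odd_simps[OF m] rel fps_pair_eq_iff)
      then have FP0: "FP (a + b * fps_X ^ m) (a - b * fps_X ^ m) = 0"
        using F0 by simp
      have sum: "a + b * fps_X ^ m = 0" and diff: "a - b * fps_X ^ m = 0"
        using arg_cong[OF FP0, of fp1] arg_cong[OF FP0, of fp2] by (simp_all only: fps_pair.sel fps_pair_simps)
      have "a + a = (a + b * fps_X ^ m) + (a - b * fps_X ^ m)"
        by simp
      then have "a + a = 0"
        by (simp only: sum diff add_0)
      then have "a $ n + a $ n = 0" for n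
        by (metis fps_add_nth fps_zero_nth)
      then have "a = 0"
        using two by (simp add: fps_eq_iff flip: mult_2)
      moreover from this have "b = 0"
        using sum by simp
      ultimately show "A_rel r dvd F"
        using F by simp
    qed
  qed (simp_all add: Phi_odd_simps[OF m])
qed

definition odd_image :: "nat \<Rightarrow> 'a::field fps_pair set" where
  "odd_image m = {x. fps_agree m (fp1 x) (fp2 x)}"

lemma range_Phi_odd:
  assumes m: "m \<ge> 1" and two: "(2::'a::field) \<noteq> 0"
  shows "range (Phi_odd m :: 'a fps fps \<Rightarrow> 'a fps_pair) = odd_image m"
proof (intro equalityI subsetI)
  fix x :: "'a fps_pair"
  assume "x \<in> odd_image m"
  then have "fps_agree m (fp1 x - fp2 x) 0"
    by (simp add: odd_image_def flip: fps_agree_iff_diff)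
  then have "fps_agree m (fps_const (inverse 2) * (fp1 x - fp2 x)) 0"
    by (rule fps_agree_mult_zero_right)
  moreover have "fps_agree m f 0 \<Longrightarrow> f = fps_X ^ m * fps_shift m f" for f :: "'a fps"
    by (simp add: fps_eq_iff fps_X_power_mult_nth fps_agree_def)
  ultimately obtain d where d: "fps_const (inverse 2) * (fp1 x - fp2 x) = fps_X ^ m * d"
    by blast
  define a where "a = fps_const (inverse 2) * (fp1 x + fp2 x)"
  have "inverse 2 * (p + q) + inverse 2 * (p - q) = inverse 2 * (2 * p)"
    "inverse 2 * (p + q) - inverse 2 * (p - q) = inverse 2 * (2 * q)" for p q :: 'a
    by (simp_all only: mult_2 flip: distrib_left right_diff_distrib) (simp_all add: algebra_simps)
  then have "inverse 2 * (p + q) + inverse 2 * (p - q) = p"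
    "inverse 2 * (p + q) - inverse 2 * (p - q) = q" for p q :: 'a
    using two by simp_all
  then have "a + fps_X ^ m * d = fp1 x" "a - fps_X ^ m * d = fp2 x"
    unfolding a_def d[symmetric] by (simp_all add: fps_eq_iff)
  then have "Phi_odd m (fps_const a + fps_const d * Yv) = x"
    using m by (simp add: Phi_odd_simps fps_pair_eq_iff mult.commute)
  then show "x \<in> range (Phi_odd m)"
    by (metis rangeI)
next
  fix x :: "'a fps_pair"
  assume "x \<in> range (Phi_odd m)"
  then obtain F where "x = Phi_odd m F"
    by blast
  moreover have "fps_agree m (fps_X ^ m) (0 :: 'a fps)" "fps_agree m (- (fps_X ^ m)) (0 :: 'a fps)"
    by (simp_all add: fps_agree_def)
  then have "fps_agree m (fps_X ^ m) (- (fps_X ^ m) :: 'a fps)"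
    by (meson fps_agree_sym fps_agree_trans)
  ultimately show "x \<in> odd_image m"
    using m by (simp add: odd_image_def Phi_odd_def subst2_agree)
qed

definition branch_map :: "bool \<Rightarrow> 'a::field fps \<Rightarrow> 'a fps \<Rightarrow> 'a fps_pair \<Rightarrow> 'a fps_pair" where
  "branch_map sw a b x =
     (if sw then FP (fp2 x oo a) (fp1 x oo b) else FP (fp1 x oo a) (fp2 x oo b))"

lemma branch_map_add: "branch_map sw a b (x + y) = branch_map sw a b x + branch_map sw a b y"
  by (simp add: branch_map_def fps_pair_eq_iff fps_compose_add_distrib)

lemma branch_map_mult:
  "a $ 0 = 0 \<Longrightarrow> b $ 0 = 0 \<Longrightarrow> branch_map sw a b (x * y) = branch_map sw a b x * branch_map sw a b y"
  by (simp add: branch_map_def fps_pair_eq_iff fps_compose_mult_distrib)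

lemma branch_map_const: "branch_map sw a b (FP (fps_const c) (fps_const c)) = FP (fps_const c) (fps_const c)"
  by (simp add: branch_map_def)

lemma branch_map_in_odd_image:
  assumes "fps_agree m a b" "x \<in> odd_image m"
  shows "branch_map sw a b x \<in> odd_image m"
proof -
  have "fps_agree m (fp1 x oo a) (fp2 x oo b)" "fps_agree m (fp2 x oo a) (fp1 x oo b)"
    using assms unfolding odd_image_def
    by (auto intro: fps_agree_trans[OF fps_agree_compose_left fps_agree_compose_right[of m a b]]
        fps_agree_sym)
  then show ?thesis
    by (simp add: odd_image_def branch_map_def)
qed

lemma branch_map_branch_map:
  assumes "a1 $ 0 = 0" "b1 $ 0 = 0" "a2 $ 0 = 0" "b2 $ 0 = 0"
  shows "branch_map sw1 a1 b1 (branch_map sw2 a2 b2 x) =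
    branch_map (sw1 \<noteq> sw2) (if sw1 then b2 oo a1 else a2 oo a1) (if sw1 then a2 oo b1 else b2 oo b1) x"
  using assms by (cases sw1; cases sw2) (simp_all add: branch_map_def fps_compose_assoc)

lemma branch_map_X: "branch_map False fps_X fps_X x = x"
  by (simp add: branch_map_def fps_pair_eq_iff)

lemma subst2_branches:
  assumes g0: "g $ 0 = 0" and m: "m \<ge> 1"
  shows "subst2 F g (g ^ m) = fp1 (Phi_odd m F) oo g"
    and "subst2 F g (- (g ^ m)) = fp2 (Phi_odd m F) oo g"
  using subst2_compose[of fps_X "fps_X ^ m" g F] subst2_compose[of fps_X "- (fps_X ^ m)" g F] assms
  by (simp_all add: Phi_odd_def fps_X_power_compose fps_compose_uminus)

lemma kalg_hom_factors_through_branch: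
  fixes b :: "'a::field fps fps \<Rightarrow> 'a fps"
  assumes m: "m \<ge> 1" and b: "kalg_hom b" and rel: "b Yv ^ 2 = b Xv ^ (2 * m)"
  obtains e where "\<And>F. b F = (if e then fp1 (Phi_odd m F) else fp2 (Phi_odd m F)) oo b Xv"
proof -
  have g0: "b Xv $ 0 = 0" and h0: "b Yv $ 0 = 0"
    using b by (simp_all add: kalg_hom_Xv_nth_0 kalg_hom_Yv_nth_0)
  have rep: "b F = subst2 F (b Xv) (b Yv)" for F
    by (rule kalg_hom_eqI[OF b kalg_hom_subst2[OF g0 h0]]) (simp_all add: g0 h0 subst2_Xv subst2_Yv)
  have "b Yv ^ 2 = (b Xv ^ m) ^ 2"
    using rel by (simp add: power_mult[symmetric] mult.commute)
  then consider "b Yv = b Xv ^ m" | "b Yv = - (b Xv ^ m)"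
    unfolding power2_eq_iff by blast
  then show ?thesis
  proof cases
    case 1
    show ?thesis
    proof (rule that[of True])
      fix F
      have "b F = subst2 F (b Xv) (b Xv ^ m)"
        using rep[of F] 1 by simp
      then show "b F = (if True then fp1 (Phi_odd m F) else fp2 (Phi_odd m F)) oo b Xv"
        using subst2_branches(1)[OF g0 m, of F] by simp
    qed
  next
    case 2
    show ?thesis
    proof (rule that[of False])
      fix F
      have "b F = subst2 F (b Xv) (- (b Xv ^ m))"
        using rep[of F] 2 by simp
      then show "b F = (if False then fp1 (Phi_odd m F) else fp2 (Phi_odd m F)) oo b Xv"
        using subst2_branches(2)[OF g0 m, of F] by simp
    qed
  qed
qed

lemma odd_transport_branchwise:
  fixes \<sigma> :: "'a::field fps fps set \<Rightarrow> 'a fps fps set"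
  assumes r: "r + 1 = 2 * m" and two: "(2::'a) \<noteq> 0" and \<sigma>: "kalg_aut r \<sigma>"
  obtains e1 e2 g1 g2 where "g1 $ 0 = 0" "g2 $ 0 = 0"
    and "\<And>F. A_model.transport r (Phi_odd m) \<sigma> (Phi_odd m F) =
      FP ((if e1 then fp1 (Phi_odd m F) else fp2 (Phi_odd m F)) oo g1)
         ((if e2 then fp1 (Phi_odd m F) else fp2 (Phi_odd m F)) oo g2)"
proof -
  interpret O: A_model r "Phi_odd m :: 'a fps fps \<Rightarrow> 'a fps_pair"
    by (rule A_model_Phi_odd[OF r two])
  have m: "m \<ge> 1"
    using r by simp
  define b1 where "b1 F = fp1 (O.transport \<sigma> (Phi_odd m F))" for F
  define b2 where "b2 F = fp2 (O.transport \<sigma> (Phi_odd m F))" for F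
  have scalar: "Phi_odd m (fps_const (fps_const c)) = FP (fps_const c) (fps_const c)" for c :: 'a
    by (rule Phi_odd_simps(6)[OF m])
  have hom: "kalg_hom b1" "kalg_hom b2"
    unfolding kalg_hom_def b1_def b2_def
    using O.transport_add[OF \<sigma>] O.transport_mult[OF \<sigma>] O.transport_scalar[OF \<sigma>]
    by (simp_all add: Phi_odd_simps(1,2)[OF m] scalar)
  moreover have "b1 (Yv ^ 2) = b1 (Xv ^ (2 * m))" "b2 (Yv ^ 2) = b2 (Xv ^ (2 * m))"
    unfolding b1_def b2_def r[symmetric] O.Phi_A_rel by simp_all
  then have "b1 Yv ^ 2 = b1 Xv ^ (2 * m)" "b2 Yv ^ 2 = b2 Xv ^ (2 * m)"
    by (simp_all only: kalg_hom_power[OF hom(1)] kalg_hom_power[OF hom(2)])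
  ultimately obtain e1 e2
    where e1: "\<And>F. b1 F = (if e1 then fp1 (Phi_odd m F) else fp2 (Phi_odd m F)) oo b1 Xv"
      and e2: "\<And>F. b2 F = (if e2 then fp1 (Phi_odd m F) else fp2 (Phi_odd m F)) oo b2 Xv"
    using kalg_hom_factors_through_branch[OF m] by metis
  have "b1 Xv $ 0 = 0" "b2 Xv $ 0 = 0"
    using hom by (simp_all add: kalg_hom_Xv_nth_0)
  moreover have "O.transport \<sigma> (Phi_odd m F) =
      FP ((if e1 then fp1 (Phi_odd m F) else fp2 (Phi_odd m F)) oo b1 Xv)
         ((if e2 then fp1 (Phi_odd m F) else fp2 (Phi_odd m F)) oo b2 Xv)" for F
    unfolding e1[of F, symmetric] e2[of F, symmetric] by (simp add: b1_def b2_def fps_pair_eq_iff)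
  ultimately show ?thesis
    by (rule that)
qed

text \<open>As it is injective, a transported automorphism uses both branches, possibly swapped.\<close>

lemma odd_transport_eq_branch_map:
  fixes \<sigma> :: "'a::field fps fps set \<Rightarrow> 'a fps fps set"
  assumes r: "r + 1 = 2 * m" and two: "(2::'a) \<noteq> 0" and \<sigma>: "kalg_aut r \<sigma>"
  obtains sw g1 g2 where "g1 $ 0 = 0" "g2 $ 0 = 0"
    and "\<And>F. A_model.transport r (Phi_odd m) \<sigma> (Phi_odd m F) = branch_map sw g1 g2 (Phi_odd m F)"
proof -
  interpret O: A_model r "Phi_odd m :: 'a fps fps \<Rightarrow> 'a fps_pair"
    by (rule A_model_Phi_odd[OF r two])
  have m: "m \<ge> 1"
    using r by simp
  obtain g1 g2 e1 e2 where g0: "g1 $ 0 = 0" "g2 $ 0 = 0"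
    and e: "\<And>F. O.transport \<sigma> (Phi_odd m F) =
      FP ((if e1 then fp1 (Phi_odd m F) else fp2 (Phi_odd m F)) oo g1)
         ((if e2 then fp1 (Phi_odd m F) else fp2 (Phi_odd m F)) oo g2)"
    using odd_transport_branchwise[OF r two \<sigma>] by metis
  have "e1 \<noteq> e2"
  proof
    assume "e1 = e2"
    define Fy :: "'a fps fps" where "Fy = (if e1 then Yv else - Yv)"
    have PX: "Phi_odd m (Xv ^ m :: 'a fps fps) = FP (fps_X ^ m) (fps_X ^ m)"
      unfolding O.Phi_power Phi_odd_simps(4)[OF m] by (simp add: fps_pair_eq_iff)
    have PY: "Phi_odd m Fy = (if e1 then FP (fps_X ^ m) (- (fps_X ^ m)) else FP (- (fps_X ^ m)) (fps_X ^ m))"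
      using m by (simp add: Fy_def O.Phi_uminus Phi_odd_simps fps_pair_eq_iff)
    have "O.transport \<sigma> (Phi_odd m (Xv ^ m)) = O.transport \<sigma> (Phi_odd m Fy)"
      unfolding e unfolding PX PY using \<open>e1 = e2\<close> by simp
    then have "Phi_odd m (Xv ^ m) = Phi_odd m Fy"
      by (rule O.transport_inj[OF \<sigma>])
    then have "(fps_X ^ m :: 'a fps) = - (fps_X ^ m)"
      unfolding PX PY by (cases e1) (simp_all add: fps_pair_eq_iff)
    then have "(fps_X ^ m :: 'a fps) $ m = (- (fps_X ^ m)) $ m"
      by (rule arg_cong)
    then show False
      using two by (simp add: eq_neg_iff_add_eq_0 flip: mult_2)
  qed
  then have "O.transport \<sigma> (Phi_odd m F) = branch_map (\<not> e1) g1 g2 (Phi_odd m F)" for F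
    unfolding e by (cases e1) (simp_all add: branch_map_def)
  then show ?thesis
    by (rule that[OF g0])
qed

lemma branch_map_inverse:
  assumes "v1 $ 0 = 0" "v1 $ 1 \<noteq> 0" "v2 $ 0 = 0" "v2 $ 1 \<noteq> 0"
  shows "branch_map sw (if sw then fps_inv v2 else fps_inv v1) (if sw then fps_inv v1 else fps_inv v2)
      (branch_map sw v1 v2 x) = x"
    and "branch_map sw v1 v2 (branch_map sw (if sw then fps_inv v2 else fps_inv v1)
      (if sw then fps_inv v1 else fps_inv v2) x) = x"
  using assms by (cases sw; simp add: branch_map_branch_map fps_inv fps_inv_right branch_map_X)+

locale odd_involution =
  fixes r m :: nat and \<sigma> :: "'a::field fps fps set \<Rightarrow> 'a fps fps set"
    and sw :: bool and g1 g2 :: "'a fps"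
  assumes r: "r + 1 = 2 * m" and two: "(2::'a) \<noteq> 0" and \<sigma>: "nontriv_involution r \<sigma>"
    and g1_0: "g1 $ 0 = 0" and g2_0: "g2 $ 0 = 0"
    and transport_eq:
      "\<And>F. A_model.transport r (Phi_odd m) \<sigma> (Phi_odd m F) = branch_map sw g1 g2 (Phi_odd m F)"
begin

sublocale O: A_model r "Phi_odd m :: 'a fps fps \<Rightarrow> 'a fps_pair"
  by (rule A_model_Phi_odd[OF r two])

lemma m_ge_1: "m \<ge> 1"
  using r by simp

lemma kalg_aut_\<sigma>: "kalg_aut r \<sigma>"
  using \<sigma> by (simp add: nontriv_involution_def)

lemma range_Phi: "range (Phi_odd m :: 'a fps fps \<Rightarrow> 'a fps_pair) = odd_image m"
  by (rule range_Phi_odd[OF m_ge_1 two])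

lemma transport_Xv: "O.transport \<sigma> (Phi_odd m Xv) = FP g1 g2"
  using transport_eq[of Xv] m_ge_1 g1_0 g2_0 by (cases sw) (simp_all add: branch_map_def Phi_odd_simps)

lemma Phi_in_odd_image: "Phi_odd m (F :: 'a fps fps) \<in> odd_image m"
  by (metis range_Phi rangeI)

lemma g_agree: "fps_agree m g1 g2"
  using O.transport_in_range[OF kalg_aut_\<sigma>, of Xv] by (simp add: transport_Xv range_Phi odd_image_def)

lemma branch_map_g_involution: "branch_map sw g1 g2 (FP g1 g2) = FP fps_X fps_X"
proof -
  obtain G where G: "FP g1 g2 = Phi_odd m G"
    using O.transport_in_range[OF kalg_aut_\<sigma>, of Xv] by (auto simp: transport_Xv)
  have "Phi_odd m Xv = O.transport \<sigma> (O.transport \<sigma> (Phi_odd m Xv))"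
    by (simp add: O.transport_involution[OF \<sigma>])
  also have "\<dots> = branch_map sw g1 g2 (Phi_odd m G)"
    unfolding transport_Xv G by (rule transport_eq)
  finally show ?thesis
    using m_ge_1 by (simp add: Phi_odd_simps flip: G)
qed

lemma unswapped_involutions: "\<not> sw \<Longrightarrow> g1 oo g1 = fps_X \<and> g2 oo g2 = fps_X"
  using branch_map_g_involution by (simp add: branch_map_def)

lemma swapped_inverses: "sw \<Longrightarrow> g2 oo g1 = fps_X \<and> g1 oo g2 = fps_X"
  using branch_map_g_involution by (simp add: branch_map_def)

lemma nontrivial: "\<not> (\<not> sw \<and> g1 = fps_X \<and> g2 = fps_X)"
proof
  assume "\<not> sw \<and> g1 = fps_X \<and> g2 = fps_X"
  then have "O.transport \<sigma> (Phi_odd m F) = Phi_odd m F" for F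
    by (simp add: transport_eq branch_map_X)
  then show False
    using O.transport_nontrivial[OF \<sigma>] by metis
qed

text \<open>Conjugating by the automorphism that substitutes \<open>va, vb\<close> into the branches (after
  swapping them if \<open>swc\<close>) turns \<open>\<sigma>\<close> into the branch map \<open>R\<close>.\<close>

lemma conjugate_to_branch_map:
  fixes swc :: bool and va vb :: "'a fps"
  defines "wa \<equiv> if swc then fps_inv vb else fps_inv va"
    and "wb \<equiv> if swc then fps_inv va else fps_inv vb"
  assumes v: "va $ 0 = 0" "va $ 1 \<noteq> 0" "vb $ 0 = 0" "vb $ 1 \<noteq> 0" "fps_agree m va vb"
    and R: "\<And>x :: 'a fps_pair. branch_map swc wa wb (branch_map sw g1 g2 (branch_map swc va vb x)) = R x"
    and Gx: "R (Phi_odd m Xv) = Phi_odd m Gx" and Gy: "R (Phi_odd m Yv) = Phi_odd m Gy"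
  shows "conjugate_to r \<sigma> Gx Gy"
proof (rule O.conjugate_toI[where t = "branch_map swc wa wb" and ti = "branch_map swc va vb"])
  have w: "wa $ 0 = 0" "wb $ 0 = 0" "fps_agree m wa wb"
    using v fps_inv_agree[OF v(1-4)] fps_inv_agree[OF v(3,4,1,2) fps_agree_sym]
    by (simp_all add: wa_def wb_def)
  show "branch_map swc wa wb (Phi_odd m F) \<in> range (Phi_odd m)"
    and "branch_map swc va vb (Phi_odd m F) \<in> range (Phi_odd m)" for F :: "'a fps fps"
    unfolding range_Phi using v w Phi_in_odd_image by (simp_all add: branch_map_in_odd_image)
  show "branch_map swc wa wb (branch_map swc va vb x) = x"
    and "branch_map swc va vb (branch_map swc wa wb x) = x" for x :: "'a fps_pair"
    unfolding wa_def wb_def using branch_map_inverse[OF v(1-4)] by simp_all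
  show "branch_map swc wa wb (x + y) = branch_map swc wa wb x + branch_map swc wa wb y"
    and "branch_map swc wa wb (x * y) = branch_map swc wa wb x * branch_map swc wa wb y"
    for x y :: "'a fps_pair"
    using w by (simp_all add: branch_map_add branch_map_mult)
  show "branch_map swc wa wb (Phi_odd m (fps_const (fps_const c))) = Phi_odd m (fps_const (fps_const c))"
    for c :: 'a
    using m_ge_1 by (simp add: Phi_odd_simps branch_map_const)
  have "branch_map swc wa wb (O.transport \<sigma> (branch_map swc va vb (Phi_odd m F))) = R (Phi_odd m F)"
    for F :: "'a fps fps"
  proof -
    obtain G where "branch_map swc va vb (Phi_odd m F) = Phi_odd m G"
      using v by (metis branch_map_in_odd_image imageE range_Phi rangeI)
    then show ?thesis
      using R[of "Phi_odd m F"] by (simp add: transport_eq)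
  qed
  then show "branch_map swc wa wb (O.transport \<sigma> (branch_map swc va vb (Phi_odd m Xv))) = Phi_odd m Gx"
    and "branch_map swc wa wb (O.transport \<sigma> (branch_map swc va vb (Phi_odd m Yv))) = Phi_odd m Gy"
    using Gx Gy by simp_all
qed (rule kalg_aut_\<sigma>)

lemma unswapped_conjugate_to:
  fixes swc :: bool
  defines "R \<equiv> branch_map False (fps_const (if swc then g2 $ 1 else g1 $ 1) * fps_X)
        (fps_const (if swc then g1 $ 1 else g2 $ 1) * fps_X)"
  assumes "\<not> sw" and c: "m = 1 \<or> g1 $ 1 = g2 $ 1"
    and Gx: "R (Phi_odd m Xv) = Phi_odd m Gx" and Gy: "R (Phi_odd m Yv) = Phi_odd m Gy"
  shows "conjugate_to r \<sigma> Gx Gy"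
proof -
  have gg: "g1 oo g1 = fps_X" "g2 oo g2 = fps_X"
    using unswapped_involutions \<open>\<not> sw\<close> by simp_all
  define v1 where "v1 = fps_const (inverse 2) * (fps_X + fps_const (g1 $ 1) * g1)"
  define v2 where "v2 = fps_const (inverse 2) * (fps_X + fps_const (g2 $ 1) * g2)"
  have v1: "v1 $ 0 = 0" "v1 $ 1 = 1" "v1 oo g1 = fps_const (g1 $ 1) * v1"
    using fps_involution_linearize[OF g1_0 gg(1) two] by (simp_all add: v1_def)
  have v2: "v2 $ 0 = 0" "v2 $ 1 = 1" "v2 oo g2 = fps_const (g2 $ 1) * v2"
    using fps_involution_linearize[OF g2_0 gg(2) two] by (simp_all add: v2_def)
  have "fps_agree m v1 v2"
    using c
  proof
    assume "m = 1"
    then show ?thesis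
      using v1 v2 by (simp add: fps_agree_def)
  next
    assume "g1 $ 1 = g2 $ 1"
    then show ?thesis
      unfolding v1_def v2_def by (simp only: \<open>g1 $ 1 = g2 $ 1\<close>) (intro fps_agree_mult fps_agree_add fps_agree_refl g_agree)
  qed
  moreover have lin: "(v oo g) oo fps_inv v = fps_const c * fps_X"
    if "v $ 0 = 0" "v $ 1 = 1" "v oo g = fps_const c * v" for c :: 'a and v g :: "'a fps"
    using that by (simp add: fps_compose_mult_distrib fps_inv_right)
  moreover have "branch_map swc (if swc then fps_inv v2 else fps_inv v1) (if swc then fps_inv v1 else fps_inv v2)
      (branch_map sw g1 g2 (branch_map swc v1 v2 x)) = R x" for x
    using v1 v2 g1_0 g2_0 \<open>\<not> sw\<close> lin[OF v1] lin[OF v2]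
    by (cases swc) (simp_all add: R_def branch_map_branch_map)
  ultimately show ?thesis
    using v1 v2 Gx Gy unfolding R_def[symmetric]
    by (intro conjugate_to_branch_map[where swc = swc and va = v1 and vb = v2 and R = R]) simp_all
qed

lemma Phi_odd_values:
  "Phi_odd m (Xv :: 'a fps fps) = FP fps_X fps_X" "Phi_odd m (- Xv :: 'a fps fps) = FP (- fps_X) (- fps_X)"
  "Phi_odd m (Yv :: 'a fps fps) = FP (fps_X ^ m) (- (fps_X ^ m))"
  "Phi_odd m (- Yv :: 'a fps fps) = FP (- (fps_X ^ m)) (fps_X ^ m)"
  using m_ge_1 by (simp_all add: O.Phi_uminus Phi_odd_simps fps_pair_eq_iff)

lemma unswapped_linear_coeffs:
  assumes "\<not> sw"
  shows "g1 $ 1 = 1 \<or> g1 $ 1 = -1" and "g2 $ 1 = 1 \<or> g2 $ 1 = -1"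
    and "\<not> (g1 $ 1 = 1 \<and> g2 $ 1 = 1)"
proof -
  have gg: "g1 oo g1 = fps_X" "g2 oo g2 = fps_X"
    using unswapped_involutions \<open>\<not> sw\<close> by simp_all
  show "g1 $ 1 = 1 \<or> g1 $ 1 = -1" "g2 $ 1 = 1 \<or> g2 $ 1 = -1"
    using fps_involution_nth_1[OF g1_0 gg(1)] fps_involution_nth_1[OF g2_0 gg(2)]
    by (simp_all add: square_eq_1_iff)
  show "\<not> (g1 $ 1 = 1 \<and> g2 $ 1 = 1)"
    using nontrivial \<open>\<not> sw\<close> fps_involution_eq_X[OF g1_0 gg(1) _ two]
      fps_involution_eq_X[OF g2_0 gg(2) _ two]
    by blast
qed

lemma unswapped_case_1:
  assumes "\<not> sw" and "m = 1"
  shows "conjugate_to r \<sigma> (- Xv) (- Yv) \<or> conjugate_to r \<sigma> Yv Xv"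
proof -
  note conj = unswapped_conjugate_to[OF \<open>\<not> sw\<close>]
  consider "g1 $ 1 = -1" "g2 $ 1 = -1" | "g1 $ 1 = 1" "g2 $ 1 = -1" | "g1 $ 1 = -1" "g2 $ 1 = 1"
    using unswapped_linear_coeffs[OF \<open>\<not> sw\<close>] by blast
  then show ?thesis
  proof cases
    case 1
    then have "conjugate_to r \<sigma> (- Xv) (- Yv)"
      by (intro conj[where swc = False]; simp only: if_False Phi_odd_values;
          simp add: branch_map_def fps_compose_uminus \<open>m = 1\<close>)
    then show ?thesis ..
  next
    case 2
    then have "conjugate_to r \<sigma> Yv Xv"
      by (intro conj[where swc = False]; simp only: if_False Phi_odd_values;
          simp add: branch_map_def fps_compose_uminus \<open>m = 1\<close>)
    then show ?thesis ..
  next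
    case 3
    then have "conjugate_to r \<sigma> Yv Xv"
      by (intro conj[where swc = True]; simp only: if_True Phi_odd_values;
          simp add: branch_map_def fps_compose_uminus \<open>m = 1\<close>)
    then show ?thesis ..
  qed
qed

text \<open>For \<open>m \<ge> 2\<close> the branches agree to first order, so both are reflections.\<close>

lemma unswapped_case_ge_2:
  assumes "\<not> sw" and "m \<noteq> 1"
  shows "conjugate_to r \<sigma> (- Xv) (if even m then Yv else - Yv)"
proof -
  have "g1 $ 1 = g2 $ 1"
    using g_agree m_ge_1 \<open>m \<noteq> 1\<close> by (simp add: fps_agree_def)
  then have "g1 $ 1 = -1" "g2 $ 1 = -1"
    using unswapped_linear_coeffs[OF \<open>\<not> sw\<close>] by auto
  then show ?thesis
    by (intro unswapped_conjugate_to[OF \<open>\<not> sw\<close>, where swc = False];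
        simp only: if_False Phi_odd_values)
      (simp_all add: branch_map_def fps_X_power_compose fps_compose_uminus power_mult_distrib
        Phi_odd_values)
qed

lemma swapped_conjugate_to:
  fixes v :: "'a fps" and e :: 'a
  defines "R \<equiv> branch_map True (fps_const e * fps_X) (fps_const e * fps_X)"
  assumes sw and v: "v $ 0 = 0" "v $ 1 \<noteq> 0" and e: "e * e = 1"
    and agree: "fps_agree m v (fps_const e * (v oo g2))"
    and Gx: "R (Phi_odd m Xv) = Phi_odd m Gx" and Gy: "R (Phi_odd m Yv) = Phi_odd m Gy"
  shows "conjugate_to r \<sigma> Gx Gy"
proof -
  have gg: "g2 oo g1 = fps_X" "g1 oo g2 = fps_X"
    using swapped_inverses \<open>sw\<close> by simp_all
  define v2 where "v2 = fps_const e * (v oo g2)"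
  have "g1 $ 1 * g2 $ 1 = 1"
    using fps_compose_nth_1[OF g2_0, of g1] gg(2) by simp
  then have v2: "v2 $ 0 = 0" "v2 $ 1 \<noteq> 0"
    using v e g2_0 fps_compose_nth_1[OF g2_0, of v] by (auto simp: v2_def)
  have "(v2 oo g1) oo fps_inv v = fps_const e * ((v oo (g2 oo g1)) oo fps_inv v)"
    using g1_0 g2_0 v by (simp add: v2_def fps_compose_mult_distrib fps_compose_assoc)
  moreover have "v oo g2 = fps_const e * v2"
    using e by (simp add: v2_def mult.assoc[symmetric])
  ultimately have "(v2 oo g1) oo fps_inv v = fps_const e * fps_X"
    and "(v oo g2) oo fps_inv v2 = fps_const e * fps_X"
    using v v2 by (simp_all add: gg fps_inv_right fps_compose_mult_distrib)
  then have "branch_map False (fps_inv v) (fps_inv v2) (branch_map sw g1 g2 (branch_map False v v2 x)) = R x"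
    for x
    using v v2 g1_0 g2_0 \<open>sw\<close> by (simp add: R_def branch_map_branch_map)
  then show ?thesis
    using v v2 agree Gx Gy unfolding v2_def[symmetric]
    by (intro conjugate_to_branch_map[where swc = False and va = v and vb = v2 and R = R]) simp_all
qed

lemma swapped_case_1:
  assumes sw and "m = 1"
  shows "conjugate_to r \<sigma> Xv (- Yv)"
proof (rule swapped_conjugate_to[OF \<open>sw\<close>, where v = fps_X and e = 1])
  show "fps_agree m fps_X (fps_const 1 * (fps_X oo g2))"
    using \<open>m = 1\<close> g2_0 by (simp add: fps_agree_def)
  show "branch_map True (fps_const 1 * fps_X) (fps_const 1 * fps_X) (Phi_odd m Xv) =
      Phi_odd m (Xv :: 'a fps fps)"
    and "branch_map True (fps_const 1 * fps_X) (fps_const 1 * fps_X) (Phi_odd m Yv) =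
      Phi_odd m (- Yv :: 'a fps fps)"
    unfolding Phi_odd_values by (simp_all add: branch_map_def)
qed simp_all

lemma swapped_case_ge_2:
  assumes sw and "m \<noteq> 1"
  shows "conjugate_to r \<sigma> Xv (- Yv) \<or> conjugate_to r \<sigma> (- Xv) (if even m then - Yv else Yv)"
proof -
  have gg: "g2 oo g1 = fps_X" "g1 oo g2 = fps_X"
    using swapped_inverses \<open>sw\<close> by simp_all
  define c where "c = g2 $ 1"
  have "g1 $ 1 = c"
    using \<open>m \<noteq> 1\<close> g_agree m_ge_1 by (simp add: fps_agree_def c_def)
  then have cc: "c * c = 1"
    using fps_compose_nth_1[OF g2_0, of g1] gg(2) by (simp add: c_def)
  define v where "v = fps_const (inverse 2) * (fps_X + fps_const c * g2)"
  have "v $ 1 = inverse 2 * (1 + c * c)"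
    by (simp add: v_def c_def)
  then have v: "v $ 0 = 0" "v $ 1 \<noteq> 0"
    using g2_0 cc two by (simp_all add: v_def)
  have "v oo g2 = fps_const (inverse 2) * (g2 + fps_const c * (g2 oo g2))"
    by (simp add: v_def fps_compose_mult_distrib[OF g2_0] fps_compose_add_distrib g2_0)
  then have "fps_const c * (v oo g2) =
      fps_const (inverse 2) * (fps_const (c * c) * (g2 oo g2) + fps_const c * g2)"
    by (simp add: algebra_simps)
  then have "fps_const c * (v oo g2) = fps_const (inverse 2) * ((g2 oo g2) + fps_const c * g2)"
    using cc by simp
  moreover have "fps_agree m fps_X (g2 oo g2)"
    using fps_agree_compose_right[OF g_agree, of g2] gg(1) by simp
  ultimately have agree: "fps_agree m v (fps_const c * (v oo g2))"
    unfolding v_def by (simp only:) (intro fps_agree_mult fps_agree_add fps_agree_refl)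
  note conj = swapped_conjugate_to[OF \<open>sw\<close> v cc agree]
  have "c = 1 \<or> c = -1"
    using cc by (simp add: square_eq_1_iff)
  then show ?thesis
  proof
    assume "c = 1"
    then have "conjugate_to r \<sigma> Xv (- Yv)"
      by (intro conj; simp only: Phi_odd_values) (simp_all add: branch_map_def fps_X_power_compose)
    then show ?thesis ..
  next
    assume "c = -1"
    then have "conjugate_to r \<sigma> (- Xv) (if even m then - Yv else Yv)"
      by (intro conj; simp only: Phi_odd_values)
        (simp_all add: branch_map_def fps_X_power_compose fps_compose_uminus power_mult_distrib
          Phi_odd_values)
    then show ?thesis ..
  qed
qed

end

lemma odd_case:
  fixes \<sigma> :: "'a::field fps fps set \<Rightarrow> 'a fps fps set"
  assumes "odd r" and two: "(2::'a) \<noteq> 0" and \<sigma>: "nontriv_involution r \<sigma>"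
  shows "if r = 1
    then conjugate_to r \<sigma> Xv (- Yv) \<or> conjugate_to r \<sigma> (- Xv) (- Yv) \<or> conjugate_to r \<sigma> Yv Xv
    else conjugate_to r \<sigma> Xv (- Yv) \<or> conjugate_to r \<sigma> (- Xv) Yv \<or> conjugate_to r \<sigma> (- Xv) (- Yv)"
proof -
  obtain k where "r = 2 * k + 1"
    using \<open>odd r\<close> by (rule oddE)
  then have r: "r + 1 = 2 * (k + 1)"
    by simp
  obtain sw g1 g2 where "g1 $ 0 = 0" "g2 $ 0 = 0"
    and "\<And>F. A_model.transport r (Phi_odd (k + 1)) \<sigma> (Phi_odd (k + 1) F) =
      branch_map sw g1 g2 (Phi_odd (k + 1) F)"
    using \<sigma> by (auto simp: nontriv_involution_def intro: odd_transport_eq_branch_map[OF r two])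
  then interpret odd_involution r "k + 1" \<sigma> sw g1 g2
    using r two \<sigma> by unfold_locales
  have "r = 1 \<longleftrightarrow> k = 0"
    using r by auto
  then show ?thesis
    using unswapped_case_1 unswapped_case_ge_2 swapped_case_1 swapped_case_ge_2
    by (cases sw; cases "k = 0"; cases "even k") auto
qed

theorem proposition1p1p3:
  fixes r :: nat and \<sigma> :: "'a::field fps fps set \<Rightarrow> 'a fps fps set"
  assumes "alg_closed_field TYPE('a)"
    and "of_nat 2 \<noteq> (0::'a)" and "of_nat (r + 1) \<noteq> (0::'a)"
    and "nontriv_involution r \<sigma>"
  shows "\<exists>\<tau>. kalg_aut r \<tau> \<and>
    (let \<rho> = (\<lambda>a. \<tau> (\<sigma> (inv_into (carrier (A_ring r)) \<tau> a))) in
      (even r \<and> \<rho> (cls r Xv) = cls r Xv \<and> \<rho> (cls r Yv) = cls r (- Yv))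
    \<or> (odd r \<and> r \<ge> 3 \<and>
        ((\<rho> (cls r Xv) = cls r Xv \<and> \<rho> (cls r Yv) = cls r (- Yv))
       \<or> (\<rho> (cls r Xv) = cls r (- Xv) \<and> \<rho> (cls r Yv) = cls r Yv)
       \<or> (\<rho> (cls r Xv) = cls r (- Xv) \<and> \<rho> (cls r Yv) = cls r (- Yv))))
    \<or> (r = 1 \<and>
        ((\<rho> (cls r Xv) = cls r Xv \<and> \<rho> (cls r Yv) = cls r (- Yv))
       \<or> (\<rho> (cls r Xv) = cls r (- Xv) \<and> \<rho> (cls r Yv) = cls r (- Yv))
       \<or> (\<rho> (cls r Xv) = cls r Yv \<and> \<rho> (cls r Yv) = cls r Xv))))"
proof -
  have two: "(2::'a) \<noteq> 0"
    using assms(2) by simp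
  have "\<exists>Gx Gy. conjugate_to r \<sigma> Gx Gy \<and>
    ((even r \<and> Gx = Xv \<and> Gy = - Yv)
    \<or> (odd r \<and> r \<ge> 3 \<and> ((Gx = Xv \<and> Gy = - Yv) \<or> (Gx = - Xv \<and> Gy = Yv) \<or> (Gx = - Xv \<and> Gy = - Yv)))
    \<or> (r = 1 \<and> ((Gx = Xv \<and> Gy = - Yv) \<or> (Gx = - Xv \<and> Gy = - Yv) \<or> (Gx = Yv \<and> Gy = Xv))))"
  proof (cases "even r")
    case True
    then show ?thesis
      using even_case[OF True two assms(4)] by blast
  next
    case False
    then have "r = 1 \<or> r \<ge> 3"
      by presburger
    then show ?thesis
      using odd_case[OF False two assms(4)] False by (cases "r = 1") (simp_all, blast+)
  qed
  then show ?thesis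
    unfolding conjugate_to_def by (elim exE conjE) (intro exI conjI, assumption, auto simp: Let_def)
qed

end
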